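(* Let $D\subset\mathbb R^m$ be open, $\epsilon_0>0$, and let $F_\epsilon:D\to\mathbb R^m$, $|\epsilon|<\epsilon_0$, be a smooth ($\mathcal C^\infty$ in $(x,\epsilon)$) near-identity family of maps, written $F_\epsilon(x)=x+\epsilon G_\epsilon(x)$. Let $D_0\subset D$ be compact. Then there is $r_0>0$ such that for every $x\in D_0$, every $n\in\mathbb N$ and every $\epsilon$ with $n|\epsilon|\le r_0$, the iterates $F_\epsilon^k(x)$, $|k|\le n$, are defined and lie in $D$, so that the interpolating vector field $X_n(x,\epsilon)$ is defined. Moreover, for every $n$, $X_n$ extends to $\epsilon=0$ as a function as smooth as the family $F_\epsilon$, and $X_n(x,0)=G_0(x)$.
   Context: For small $\epsilon$, $F_\epsilon$ is close to the identity and has a (local) inverse $F_\epsilon^{-1}$ near compact subsets of $D$; $F_\epsilon^{-k}$ denotes the $k$-th iterate of this inverse. For $\epsilon\neq0$ and a point $x$ whose iterates $x_k=F_\epsilon^k(x)$, $|k|\le n$, are defined, the interpolating vector field is $$X_n(x,\epsilon)=\epsilon^{-1}\sum_{k=1}^n p_{nk}\bigl(x_k-x_{-k}\bigr),\qquad p_{nk}=\frac{(-1)^{k+1}(n!)^2}{k(n+k)!(n-k)!};$$ equivalently, $X_n(x,\epsilon)=\partial_t p_n(0,x,\epsilon)$ where $p_n(\cdot,x,\epsilon)$ is the unique polynomial in $t$ of degree $2n$ with $p_n(k\epsilon,x,\epsilon)=x_k$ for all integers $|k|\le n$. *)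

theory Defs
  imports "HOL-Analysis.Analysis"
begin

text \<open>C^k on a set S (intended for open S): C^0 = continuous; C^(k+1) = differentiable
  on S and every directional derivative x \<mapsto> Df(x) v is C^k.\<close>
fun Ck :: "nat \<Rightarrow> ('a::euclidean_space \<Rightarrow> 'b::real_normed_vector) \<Rightarrow> 'a set \<Rightarrow> bool" where
  "Ck 0 f S \<longleftrightarrow> continuous_on S f"
| "Ck (Suc k) f S \<longleftrightarrow> f differentiable_on S \<and>
      (\<forall>v. Ck k (\<lambda>x. frechet_derivative f (at x) v) S)"

definition smooth_on :: "'a::euclidean_space set \<Rightarrow> ('a \<Rightarrow> 'b::real_normed_vector) \<Rightarrow> bool" where
  "smooth_on S f \<longleftrightarrow> (\<forall>k. Ck k f S)"

definition pcoef :: "nat \<Rightarrow> nat \<Rightarrow> real" where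
  "pcoef n k = (-1) ^ (k + 1) * (fact n)^2 / (real k * fact (n + k) * fact (n - k))"

definition interp_field :: "(real \<Rightarrow> 'a \<Rightarrow> 'a::real_vector) \<Rightarrow> (real \<Rightarrow> 'a \<Rightarrow> 'a) \<Rightarrow> nat \<Rightarrow> 'a \<Rightarrow> real \<Rightarrow> 'a" where
  "interp_field F Finv n x e =
     (1 / e) *\<^sub>R (\<Sum>k=1..n. pcoef n k *\<^sub>R ((F e ^^ k) x - (Finv e ^^ k) x))"

end

theory Submission
  imports Defs "HOL-Analysis.Analysis"
begin

(* On a compact neighbourhood K of D0 the field G and its x-derivative are bounded, say by M
   and L. For |e| <= r0 the map F e = id + e G then moves points by at most |e| M, is injective
   on a neighbourhood V of D0 (since |e| L < 1), and every point near D0 has a preimage in V by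
   the contraction principle for z |-> y - e G z. Hence n forward and backward steps with
   n |e| <= r0 stay close to the starting point. The inverse (y, e) |-> F_e^{-1} y is smooth:
   (x, e) |-> (F e x, e) is injective with invertible derivative, so invariance of domain and an
   inverse function argument apply. Finally x_k - x_{-k} telescopes into e times a sum of values
   of G along the orbit, which removes the factor 1/e from X_n; the resulting expression is
   smooth up to e = 0, where it equals (sum_k 2 k p_nk) G 0 x = G 0 x by the alternating
   binomial identity sum_{k=1..n} (-1)^(k+1) C(2n, n+k) = C(2n-1, n). *)

section \<open>Calculus of C^k functions\<close>

lemma Ck_subset: "Ck k f S \<Longrightarrow> T \<subseteq> S \<Longrightarrow> Ck k f T"
  by (induction k arbitrary: f) (auto intro: continuous_on_subset differentiable_on_subset)

lemma Ck_SucD: "Ck (Suc k) f S \<Longrightarrow> Ck k f S"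
proof (induction k arbitrary: f)
  case 0 then show ?case by (simp add: differentiable_imp_continuous_on)
next
  case (Suc k) then show ?case by simp
qed

lemma frechet_derivative_transform_within_open:
  assumes "open S" "x \<in> S" "\<And>x. x \<in> S \<Longrightarrow> f x = g x" "f differentiable at x"
  shows "frechet_derivative g (at x) = frechet_derivative f (at x)"
  "g differentiable at x"
proof -
  have "(f has_derivative frechet_derivative f (at x)) (at x)"
    using assms frechet_derivative_works by blast
  then have "(g has_derivative frechet_derivative f (at x)) (at x)"
    using has_derivative_transform_within_open assms by blast
  then show "frechet_derivative g (at x) = frechet_derivative f (at x)"
     "g differentiable at x"
    using frechet_derivative_at differentiable_def by metis+
qed

lemma Ck_cong: "open S \<Longrightarrow> (\<And>x. x \<in> S \<Longrightarrow> f x = g x) \<Longrightarrow> Ck k f S \<Longrightarrow> Ck k g S"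
proof (induction k arbitrary: f g)
  case 0 then show ?case using continuous_on_cong by (metis Ck.simps(1))
next
  case (Suc k)
  have d: "f differentiable at x" if "x \<in> S" for x
    using Suc.prems that by (simp add: differentiable_on_eq_differentiable_at)
  have "g differentiable_on S"
    using frechet_derivative_transform_within_open(2)[OF Suc.prems(1) _ Suc.prems(2) d] Suc.prems(1)
    by (simp add: differentiable_on_eq_differentiable_at)
  moreover have "Ck k (\<lambda>x. frechet_derivative g (at x) v) S" for v
    using Suc.IH[OF Suc.prems(1) _, of "\<lambda>x. frechet_derivative f (at x) v"]
      frechet_derivative_transform_within_open(1)[OF Suc.prems(1) _ Suc.prems(2) d] Suc.prems(3) by simp
  ultimately show ?case by simp
qed

lemma Ck_SucI:
  assumes "open S" "\<And>x. x \<in> S \<Longrightarrow> (f has_derivative f' x) (at x)"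
    "\<And>v. Ck k (\<lambda>x. f' x v) S"
  shows "Ck (Suc k) f S"
proof -
  have "f differentiable_on S"
    using assms(1,2) differentiable_on_eq_differentiable_at differentiable_def by blast
  moreover have "Ck k (\<lambda>x. frechet_derivative f (at x) v) S" for v
    by (rule Ck_cong[OF assms(1) _ assms(3)[of v]]) (metis assms(2) frechet_derivative_at)
  ultimately show ?thesis by simp
qed

lemma Ck_Suc_has_derivative:
  assumes "open S" "Ck (Suc k) f S" "x \<in> S"
  shows "(f has_derivative frechet_derivative f (at x)) (at x)"
  using assms by (simp add: differentiable_on_eq_differentiable_at frechet_derivative_works[symmetric])

lemma Ck_const: "open S \<Longrightarrow> Ck k (\<lambda>x. c) S"
proof (induction k arbitrary: c)
  case 0 then show ?case by simp
next
  case (Suc k)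
  show ?case by (rule Ck_SucI[where f'="\<lambda>x v. 0"]) (use Suc in auto)
qed

lemma Ck_add: "open S \<Longrightarrow> Ck k f S \<Longrightarrow> Ck k g S \<Longrightarrow> Ck k (\<lambda>x. f x + g x) S"
proof (induction k arbitrary: f g)
  case 0 then show ?case by (simp add: continuous_on_add)
next
  case (Suc k)
  show ?case
  proof (rule Ck_SucI[where f'="\<lambda>x v. frechet_derivative f (at x) v + frechet_derivative g (at x) v"])
    fix x assume x: "x \<in> S"
    show "((\<lambda>x. f x + g x) has_derivative (\<lambda>v. frechet_derivative f (at x) v + frechet_derivative g (at x) v)) (at x)"
      by (rule has_derivative_add[OF Ck_Suc_has_derivative[OF Suc.prems(1,2) x] Ck_Suc_has_derivative[OF Suc.prems(1,3) x]])
  next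
    fix v
    show "Ck k (\<lambda>x. frechet_derivative f (at x) v + frechet_derivative g (at x) v) S"
      using Suc.IH[OF Suc.prems(1)] Suc.prems(2,3) by simp
  qed (rule Suc.prems(1))
qed

lemma Ck_bounded_linear: "open S \<Longrightarrow> bounded_linear L \<Longrightarrow> Ck k f S \<Longrightarrow> Ck k (\<lambda>x. L (f x)) S"
proof (induction k arbitrary: f)
  case 0 then show ?case by (simp add: bounded_linear.continuous_on)
next
  case (Suc k)
  show ?case
  proof (rule Ck_SucI[where f'="\<lambda>x v. L (frechet_derivative f (at x) v)"])
    fix x assume x: "x \<in> S"
    show "((\<lambda>x. L (f x)) has_derivative (\<lambda>v. L (frechet_derivative f (at x) v))) (at x)"
      by (rule bounded_linear.has_derivative[OF Suc.prems(2) Ck_Suc_has_derivative[OF Suc.prems(1,3) x]])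
  next
    fix v
    show "Ck k (\<lambda>x. L (frechet_derivative f (at x) v)) S"
      using Suc.IH[OF Suc.prems(1,2)] Suc.prems(3) by simp
  qed (rule Suc.prems(1))
qed

lemma Ck_diff: "open S \<Longrightarrow> Ck k f S \<Longrightarrow> Ck k g S \<Longrightarrow> Ck k (\<lambda>x. f x - g x) S"
proof -
  assume a: "open S" "Ck k f S" "Ck k g S"
  have "Ck k (\<lambda>x. - g x) S"
    by (rule Ck_bounded_linear[OF a(1) bounded_linear_minus[OF bounded_linear_ident] a(3)])
  from Ck_add[OF a(1) a(2) this] show ?thesis by simp
qed

lemma Ck_scaleR: "open S \<Longrightarrow> Ck k a S \<Longrightarrow> Ck k b S \<Longrightarrow> Ck k (\<lambda>x. a x *\<^sub>R b x) S"
proof (induction k arbitrary: a b)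
  case 0 then show ?case by (simp add: continuous_on_scaleR)
next
  case (Suc k)
  have ak: "Ck k a S" and bk: "Ck k b S" using Suc.prems Ck_SucD by blast+
  have da: "Ck k (\<lambda>x. frechet_derivative a (at x) v) S" for v using Suc.prems(2) by simp
  have db: "Ck k (\<lambda>x. frechet_derivative b (at x) v) S" for v using Suc.prems(3) by simp
  show ?case
  proof (rule Ck_SucI[where f'="\<lambda>x v. a x *\<^sub>R frechet_derivative b (at x) v + frechet_derivative a (at x) v *\<^sub>R b x"])
    show "open S" by fact
    fix x assume x: "x \<in> S"
    show "((\<lambda>x. a x *\<^sub>R b x) has_derivative (\<lambda>v. a x *\<^sub>R frechet_derivative b (at x) v + frechet_derivative a (at x) v *\<^sub>R b x)) (at x)"
      by (rule has_derivative_scaleR[OF Ck_Suc_has_derivative[OF Suc.prems(1,2) x] Ck_Suc_has_derivative[OF Suc.prems(1,3) x]])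
  next
    fix v
    show "Ck k (\<lambda>x. a x *\<^sub>R frechet_derivative b (at x) v + frechet_derivative a (at x) v *\<^sub>R b x) S"
      by (rule Ck_add[OF Suc.prems(1) Suc.IH[OF Suc.prems(1) ak db] Suc.IH[OF Suc.prems(1) da bk]])
  qed
qed

lemma Ck_sum: "open S \<Longrightarrow> (\<And>i. i \<in> I \<Longrightarrow> Ck k (f i) S) \<Longrightarrow> Ck k (\<lambda>x. \<Sum>i\<in>I. f i x) S"
proof (induction I rule: infinite_finite_induct)
  case (infinite I) then show ?case by (simp add: Ck_const)
next
  case empty then show ?case by (simp add: Ck_const)
next
  case (insert i I) then show ?case by (simp add: Ck_add)
qed

lemma Ck_Pair: "open S \<Longrightarrow> Ck k f S \<Longrightarrow> Ck k g S \<Longrightarrow> Ck k (\<lambda>x. (f x, g x)) S"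
proof (induction k arbitrary: f g)
  case 0 then show ?case by (simp add: continuous_on_Pair)
next
  case (Suc k)
  show ?case
  proof (rule Ck_SucI[where f'="\<lambda>x v. (frechet_derivative f (at x) v, frechet_derivative g (at x) v)"])
    fix x assume x: "x \<in> S"
    show "((\<lambda>x. (f x, g x)) has_derivative (\<lambda>v. (frechet_derivative f (at x) v, frechet_derivative g (at x) v))) (at x)"
      by (rule has_derivative_Pair[OF Ck_Suc_has_derivative[OF Suc.prems(1,2) x] Ck_Suc_has_derivative[OF Suc.prems(1,3) x]])
  next
    fix v
    show "Ck k (\<lambda>x. (frechet_derivative f (at x) v, frechet_derivative g (at x) v)) S"
      using Suc.IH[OF Suc.prems(1)] Suc.prems(2,3) by simp
  qed (rule Suc.prems(1))
qed

lemma Ck_ident: "open S \<Longrightarrow> Ck k (\<lambda>x. x) S"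
proof (cases k)
  case 0 then show ?thesis by simp
next
  case (Suc j)
  assume "open S"
  show ?thesis unfolding Suc
    by (rule Ck_SucI[where f'="\<lambda>x v. v"]) (use \<open>open S\<close> in \<open>auto intro: Ck_const\<close>)
qed

lemma linear_eq_sum_Basis:
  fixes L :: "'a::euclidean_space \<Rightarrow> 'b::real_vector"
  assumes "linear L"
  shows "L u = (\<Sum>i\<in>Basis. (u \<bullet> i) *\<^sub>R L i)"
proof -
  have "L u = L (\<Sum>i\<in>Basis. (u \<bullet> i) *\<^sub>R i)" by (simp add: euclidean_representation)
  also have "\<dots> = (\<Sum>i\<in>Basis. (u \<bullet> i) *\<^sub>R L i)"
    using assms by (simp add: linear_sum linear_scale)
  finally show ?thesis .
qed

lemma smooth_on_Ck: "smooth_on S f \<Longrightarrow> Ck k f S"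
  by (simp add: smooth_on_def)

lemma smooth_on_frechet_derivative: "smooth_on S f \<Longrightarrow> smooth_on S (\<lambda>x. frechet_derivative f (at x) v)"
  unfolding smooth_on_def by (metis Ck.simps(2))

(* The chain-rule derivative f'(g x) (g' x v) is expanded in the basis, so that it becomes a
   sum of products of C^k functions. *)
lemma Ck_compose:
  fixes g :: "'a::euclidean_space \<Rightarrow> 'b::euclidean_space" and f :: "'b \<Rightarrow> 'c::real_normed_vector"
  shows "open S \<Longrightarrow> open T \<Longrightarrow> Ck k g S \<Longrightarrow> smooth_on T f \<Longrightarrow> g ` S \<subseteq> T \<Longrightarrow> Ck k (\<lambda>x. f (g x)) S"
proof (induction k arbitrary: g f)
  case 0
  have "continuous_on T f" using smooth_on_Ck[OF 0(4), of 0] by simp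
  then show ?case using 0 continuous_on_compose2 by (metis Ck.simps(1))
next
  case (Suc k)
  have gd: "(g has_derivative frechet_derivative g (at x)) (at x)" if "x \<in> S" for x
    using Ck_Suc_has_derivative[OF Suc.prems(1,3) that] .
  have fd: "(f has_derivative frechet_derivative f (at y)) (at y)" if "y \<in> T" for y
    using Ck_Suc_has_derivative[OF Suc.prems(2) smooth_on_Ck[OF Suc.prems(4)] that] .
  have lin: "linear (frechet_derivative f (at y))" if "y \<in> T" for y
    using fd[OF that] has_derivative_linear by blast
  show ?case
  proof (rule Ck_SucI[where f'="\<lambda>x v. frechet_derivative f (at (g x)) (frechet_derivative g (at x) v)"])
    show "open S" by fact
    fix x assume "x \<in> S"
    then show "((\<lambda>x. f (g x)) has_derivative (\<lambda>v. frechet_derivative f (at (g x)) (frechet_derivative g (at x) v))) (at x)"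
      using diff_chain_at[OF gd fd] Suc.prems(5) by (auto simp: o_def)
  next
    fix v
    have "Ck k (\<lambda>x. \<Sum>i\<in>Basis. (frechet_derivative g (at x) v \<bullet> i) *\<^sub>R frechet_derivative f (at (g x)) i) S"
    proof (intro Ck_sum Ck_scaleR)
      fix i :: 'b
      show "Ck k (\<lambda>x. frechet_derivative g (at x) v \<bullet> i) S"
        using Ck_bounded_linear[OF Suc.prems(1) bounded_linear_inner_left, of k "\<lambda>x. frechet_derivative g (at x) v" i]
          Suc.prems(3) by simp
      show "Ck k (\<lambda>x. frechet_derivative f (at (g x)) i) S"
        using Suc.IH[OF Suc.prems(1,2) Ck_SucD[OF Suc.prems(3)] smooth_on_frechet_derivative[OF Suc.prems(4)] Suc.prems(5)] .
    qed (use Suc.prems in auto)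
    then show "Ck k (\<lambda>x. frechet_derivative f (at (g x)) (frechet_derivative g (at x) v)) S"
    proof (rule Ck_cong[OF Suc.prems(1), rotated])
      fix x assume "x \<in> S"
      then have "g x \<in> T" using Suc.prems(5) by blast
      then show "(\<Sum>i\<in>Basis. (frechet_derivative g (at x) v \<bullet> i) *\<^sub>R frechet_derivative f (at (g x)) i) = frechet_derivative f (at (g x)) (frechet_derivative g (at x) v)"
        using linear_eq_sum_Basis[OF lin] by metis
    qed
  qed
qed

section \<open>Linear systems with a parameter and smooth inverses\<close>

lemma linear_inj_inv:
  fixes L :: "'b::euclidean_space \<Rightarrow> 'b"
  assumes "linear L" "inj L"
  shows "L (inv L v) = v" "inv L (L u) = u" "linear (inv L)" "bounded_linear (inv L)"
proof -
  have s: "surj L" using linear_injective_imp_surjective assms by blast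
  show "L (inv L v) = v" using s by (simp add: surj_f_inv_f)
  show "inv L (L u) = u" using assms by simp
  show li: "linear (inv L)" using inj_linear_imp_inv_linear assms by blast
  then show "bounded_linear (inv L)" by (simp add: linear_conv_bounded_linear)
qed

lemma norm_linear_diff_le:
  fixes A B :: "'b::euclidean_space \<Rightarrow> 'c::real_normed_vector"
  assumes "linear A" "linear B"
  shows "norm (A x - B x) \<le> (\<Sum>i\<in>Basis. norm (A i - B i)) * norm x"
proof -
  have "A x - B x = (\<Sum>i\<in>Basis. (x \<bullet> i) *\<^sub>R (A i - B i))"
    using linear_eq_sum_Basis[OF assms(1), of x] linear_eq_sum_Basis[OF assms(2), of x]
    by (simp add: sum_subtractf scaleR_diff_right)
  also have "norm \<dots> \<le> (\<Sum>i\<in>Basis. norm ((x \<bullet> i) *\<^sub>R (A i - B i)))" by (rule norm_sum)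
  also have "\<dots> \<le> (\<Sum>i\<in>Basis. norm x * norm (A i - B i))"
    by (intro sum_mono) (simp add: Basis_le_norm mult_right_mono)
  finally show ?thesis by (simp add: sum_distrib_left mult.commute)
qed

lemma linear_bounded_below_perturb:
  fixes A B :: "'b::euclidean_space \<Rightarrow> 'c::real_normed_vector"
  assumes "linear A" "linear B" and A: "\<And>x. C * norm x \<le> norm (A x)"
    and close: "(\<Sum>i\<in>Basis. norm (A i - B i)) \<le> C / 2"
  shows "C / 2 * norm x \<le> norm (B x)"
proof -
  have "C * norm x \<le> norm (B x) + norm (A x - B x)"
    using A[of x] norm_triangle_sub[of "A x" "B x"] by linarith
  moreover have "norm (A x - B x) \<le> C / 2 * norm x"
    using norm_linear_diff_le[OF assms(1,2), of x] mult_right_mono[OF close norm_ge_zero[of x]] by linarith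
  ultimately show ?thesis by simp
qed

lemma continuous_on_linear_solve:
  fixes A :: "'y::topological_space \<Rightarrow> 'b::euclidean_space \<Rightarrow> 'b"
  assumes lin: "\<And>y. y \<in> U \<Longrightarrow> linear (A y)" and inj: "\<And>y. y \<in> U \<Longrightarrow> inj (A y)"
    and cA: "\<And>u. continuous_on U (\<lambda>y. A y u)" and cb: "continuous_on U b"
  shows "continuous_on U (\<lambda>y. inv (A y) (b y))"
  unfolding continuous_on_def
proof
  fix y0 assume y0: "y0 \<in> U"
  define w where "w y = inv (A y) (b y)" for y
  obtain C where C: "C > 0" "\<And>x. C * norm x \<le> norm (A y0 x)"
    using linear_inj_bounded_below_pos[OF lin[OF y0] inj[OF y0]] by blast
  define e where "e y = (\<Sum>i\<in>Basis. norm (A y0 i - A y i))" for y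
  have "((\<lambda>y. e y) \<longlongrightarrow> (\<Sum>i\<in>(Basis::'b set). norm (A y0 i - A y0 i))) (at y0 within U)"
    unfolding e_def
    by (intro tendsto_intros) (use cA y0 in \<open>auto simp: continuous_on_def\<close>)
  then have e0: "((\<lambda>y. e y) \<longlongrightarrow> 0) (at y0 within U)" by simp
  have evU: "eventually (\<lambda>y. y \<in> U) (at y0 within U)" by (auto simp: eventually_at_filter)
  have ev: "eventually (\<lambda>y. e y < C / 2) (at y0 within U)"
    using order_tendstoD(2)[OF e0, of "C/2"] C by simp
  define g where "g y = (2 / C) * norm (b y - A y (w y0))" for y
  have "((\<lambda>y. g y) \<longlongrightarrow> (2 / C) * norm (b y0 - A y0 (w y0))) (at y0 within U)"
    unfolding g_def
    by (intro tendsto_intros) (use cA cb y0 in \<open>auto simp: continuous_on_def\<close>)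
  moreover have "b y0 - A y0 (w y0) = 0"
    unfolding w_def using linear_inj_inv(1)[OF lin[OF y0] inj[OF y0]] by simp
  ultimately have g0: "(g \<longlongrightarrow> 0) (at y0 within U)" by simp
  have "eventually (\<lambda>y. norm (w y - w y0) \<le> g y) (at y0 within U)"
    using ev evU
  proof eventually_elim
    case (elim y)
    have bd: "C / 2 * norm x \<le> norm (A y x)" for x
      using linear_bounded_below_perturb[OF lin[OF y0] lin[OF elim(2)] C(2)] elim(1)
      unfolding e_def by simp
    have "A y (w y - w y0) = b y - A y (w y0)"
      using linear_inj_inv(1)[OF lin[OF elim(2)] inj[OF elim(2)]] linear_diff[OF lin[OF elim(2)]]
      unfolding w_def by simp
    then have "(C / 2) * norm (w y - w y0) \<le> norm (b y - A y (w y0))" using bd by metis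
    then show ?case unfolding g_def using C(1) by (simp add: field_simps)
  qed
  then have "((\<lambda>y. w y - w y0) \<longlongrightarrow> 0) (at y0 within U)"
    by (rule Lim_null_comparison) (rule g0)
  then show "((\<lambda>y. inv (A y) (b y)) \<longlongrightarrow> inv (A y0) (b y0)) (at y0 within U)"
    unfolding w_def by (simp add: Lim_null[symmetric])
qed

lemma continuous_at_linear_solve_Pair:
  fixes A :: "'y::metric_space \<Rightarrow> 'b::euclidean_space \<Rightarrow> 'b"
  assumes U: "open U" "y0 \<in> U"
    and lin: "\<And>y. y \<in> U \<Longrightarrow> linear (A y)" and inj: "\<And>y. y \<in> U \<Longrightarrow> inj (A y)"
    and cA: "\<And>u. continuous_on U (\<lambda>y. A y u)"
  shows "continuous (at (y0, v)) (\<lambda>p. (fst p, inv (A (fst p)) (snd p)))"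
proof -
  have "continuous_on (U \<times> UNIV) (\<lambda>p. A (fst p) u)" for u
    by (rule continuous_on_compose2[OF cA[of u] continuous_on_fst[OF continuous_on_id]]) auto
  then have "continuous_on (U \<times> UNIV) (\<lambda>p. inv (A (fst p)) (snd p))"
    by (intro continuous_on_linear_solve[where A="\<lambda>p. A (fst p)"]) (auto intro: lin inj continuous_on_snd)
  then have "continuous_on (U \<times> UNIV) (\<lambda>p. (fst p, inv (A (fst p)) (snd p)))"
    by (intro continuous_on_Pair continuous_on_fst continuous_on_id)
  then show ?thesis using U by (simp add: continuous_on_eq_continuous_at open_Times)
qed

lemma has_derivative_sum_Basis_apply:
  fixes A :: "'y::real_normed_vector \<Rightarrow> 'b::euclidean_space \<Rightarrow> 'c::real_normed_vector"
  assumes "\<And>i. i \<in> Basis \<Longrightarrow> ((\<lambda>y. A y i) has_derivative dA i) (at y0)"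
  shows "((\<lambda>p. \<Sum>i\<in>Basis. (snd p \<bullet> i) *\<^sub>R A (fst p) i) has_derivative
      (\<lambda>q. \<Sum>i\<in>Basis. (w0 \<bullet> i) *\<^sub>R dA i (fst q) + (snd q \<bullet> i) *\<^sub>R A y0 i)) (at (y0, w0))"
proof (intro has_derivative_sum)
  fix i :: 'b assume i: "i \<in> Basis"
  have d1: "((\<lambda>p. snd p \<bullet> i) has_derivative (\<lambda>q. snd q \<bullet> i)) (at (y0, w0))"
    by (intro bounded_linear_imp_has_derivative bounded_linear_compose[OF bounded_linear_inner_left bounded_linear_snd])
  have "((\<lambda>y. A y i) has_derivative dA i) (at (fst (y0, w0)))" using assms[OF i] by simp
  from has_derivative_compose[OF bounded_linear_imp_has_derivative[OF bounded_linear_fst] this]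
  have d2: "((\<lambda>p. A (fst p) i) has_derivative (\<lambda>q. dA i (fst q))) (at (y0, w0))" .
  show "((\<lambda>p. (snd p \<bullet> i) *\<^sub>R A (fst p) i) has_derivative
      (\<lambda>q. (w0 \<bullet> i) *\<^sub>R dA i (fst q) + (snd q \<bullet> i) *\<^sub>R A y0 i)) (at (y0, w0))"
    using has_derivative_scaleR[OF d1 d2] by simp
qed

lemma has_derivative_linear_solve:
  fixes A :: "'y::euclidean_space \<Rightarrow> 'b::euclidean_space \<Rightarrow> 'b"
  assumes U: "open U" and y0: "y0 \<in> U"
    and lin: "\<And>y. y \<in> U \<Longrightarrow> linear (A y)" and inj: "\<And>y. y \<in> U \<Longrightarrow> inj (A y)"
    and cA: "\<And>u. continuous_on U (\<lambda>y. A y u)"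
    and dA: "\<And>i y. i \<in> Basis \<Longrightarrow> y \<in> U \<Longrightarrow> ((\<lambda>y. A y i) has_derivative dA i y) (at y)"
    and db: "(b has_derivative db) (at y0)"
  shows "((\<lambda>y. inv (A y) (b y)) has_derivative
     (\<lambda>h. inv (A y0) (db h - (\<Sum>i\<in>Basis. (inv (A y0) (b y0) \<bullet> i) *\<^sub>R dA i y0 h)))) (at y0)"
proof -
  (* G (y, v) = (y, (A y)^-1 v) inverts \<Theta> (y, w) = (y, A y w), whose derivative T is explicit. *)
  define w0 where "w0 = inv (A y0) (b y0)"
  define \<Theta> where "\<Theta> p = (fst p, \<Sum>i\<in>Basis. (snd p \<bullet> i) *\<^sub>R A (fst p) i)" for p :: "'y \<times> 'b"
  define T where "T q = (fst q, \<Sum>i\<in>Basis. (w0 \<bullet> i) *\<^sub>R dA i y0 (fst q) + (snd q \<bullet> i) *\<^sub>R A y0 i)" for q :: "'y \<times> 'b"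
  define G where "G p = (fst p, inv (A (fst p)) (snd p))" for p :: "'y \<times> 'b"
  define G' where "G' q = (fst q, inv (A y0) (snd q - (\<Sum>i\<in>Basis. (w0 \<bullet> i) *\<^sub>R dA i y0 (fst q))))" for q :: "'y \<times> 'b"
  have bl: "bounded_linear (dA i y0)" if "i \<in> Basis" for i
    using dA[OF that y0] has_derivative_bounded_linear by blast
  have li: "bounded_linear (inv (A y0))" using linear_inj_inv(4)[OF lin[OF y0] inj[OF y0]] .
  have G0: "G (y0, b y0) = (y0, w0)" by (simp add: G_def w0_def)
  have dT: "(\<Theta> has_derivative T) (at (y0, w0))"
    unfolding \<Theta>_def T_def
    by (intro has_derivative_Pair has_derivative_fst has_derivative_ident has_derivative_sum_Basis_apply dA y0)
  have dT': "(\<Theta> has_derivative T) (at (G (y0, b y0)))"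
    using dT G0 by simp
  have blG': "bounded_linear G'"
  proof -
    have Z: "bounded_linear (\<lambda>q::'y\<times>'b. \<Sum>i\<in>Basis. (w0 \<bullet> i) *\<^sub>R dA i y0 (fst q))"
      by (rule bounded_linear_sum, rule bounded_linear_compose[OF bounded_linear_scaleR_right],
          rule bounded_linear_compose[OF bl bounded_linear_fst])
    have X: "bounded_linear (\<lambda>q::'y\<times>'b. inv (A y0) (snd q - (\<Sum>i\<in>Basis. (w0 \<bullet> i) *\<^sub>R dA i y0 (fst q))))"
      by (rule bounded_linear_compose[OF li bounded_linear_sub[OF bounded_linear_snd Z]])
    show ?thesis unfolding G'_def by (rule bounded_linear_Pair[OF bounded_linear_fst X])
  qed
  have GT: "G' \<circ> T = id"
  proof
    fix q :: "'y \<times> 'b"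
    have "(\<Sum>i\<in>Basis. (snd q \<bullet> i) *\<^sub>R A y0 i) = A y0 (snd q)"
      using linear_eq_sum_Basis[OF lin[OF y0]] by metis
    then show "(G' \<circ> T) q = id q"
      by (simp add: G'_def T_def sum.distrib linear_inj_inv(2)[OF lin[OF y0] inj[OF y0]])
  qed
  have cG0: "continuous (at (y0, b y0)) G"
    unfolding G_def by (rule continuous_at_linear_solve_Pair[OF U y0 lin inj cA])
  have ThG: "\<Theta> (G z) = z" if "z \<in> U \<times> UNIV" for z
  proof -
    have "fst z \<in> U" using that by auto
    then show ?thesis
      using linear_eq_sum_Basis[OF lin[OF \<open>fst z \<in> U\<close>], of "inv (A (fst z)) (snd z)"]
        linear_inj_inv(1)[OF lin[OF \<open>fst z \<in> U\<close>] inj[OF \<open>fst z \<in> U\<close>]]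
      by (simp add: \<Theta>_def G_def)
  qed
  have dG: "(G has_derivative G') (at (y0, b y0))"
    by (rule has_derivative_inverse_basic[OF dT' blG' GT cG0 _ _ ThG]) (use U y0 in \<open>auto simp: open_Times\<close>)
  have "((\<lambda>y. snd (G (y, b y))) has_derivative (\<lambda>h. snd (G' (h, db h)))) (at y0)"
    by (rule has_derivative_snd[OF has_derivative_compose[OF has_derivative_Pair[OF has_derivative_ident db] dG]])
  then show ?thesis by (simp add: G_def G'_def w0_def)
qed

lemma Ck_Suc_linear_solve:
  fixes A :: "'a::euclidean_space \<Rightarrow> 'b::euclidean_space \<Rightarrow> 'b"
  assumes U: "open U"
    and lin: "\<And>y. y \<in> U \<Longrightarrow> linear (A y)" and inj: "\<And>y. y \<in> U \<Longrightarrow> inj (A y)"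
    and cA: "\<And>u. continuous_on U (\<lambda>y. A y u)"
    and dA: "\<And>i y. i \<in> Basis \<Longrightarrow> y \<in> U \<Longrightarrow> ((\<lambda>y. A y i) has_derivative dA i y) (at y)"
    and dA_Ck: "\<And>i h. i \<in> Basis \<Longrightarrow> Ck k (\<lambda>y. dA i y h) U"
    and solve: "\<And>c. Ck k c U \<Longrightarrow> Ck k (\<lambda>y. inv (A y) (c y)) U"
    and b: "Ck (Suc k) b U"
  shows "Ck (Suc k) (\<lambda>y. inv (A y) (b y)) U"
proof (rule Ck_SucI[OF U])
  fix y assume "y \<in> U"
  show "((\<lambda>y. inv (A y) (b y)) has_derivative (\<lambda>h. inv (A y) (frechet_derivative b (at y) h -
      (\<Sum>i\<in>Basis. (inv (A y) (b y) \<bullet> i) *\<^sub>R dA i y h)))) (at y)"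
    by (rule has_derivative_linear_solve[OF U \<open>y \<in> U\<close> lin inj cA dA Ck_Suc_has_derivative[OF U b \<open>y \<in> U\<close>]])
next
  fix h
  have w: "Ck k (\<lambda>y. inv (A y) (b y)) U" by (rule solve[OF Ck_SucD[OF b]])
  have "Ck k (\<lambda>y. frechet_derivative b (at y) h - (\<Sum>i\<in>Basis. (inv (A y) (b y) \<bullet> i) *\<^sub>R dA i y h)) U"
  proof (rule Ck_diff[OF U])
    show "Ck k (\<lambda>y. frechet_derivative b (at y) h) U" using b by simp
    show "Ck k (\<lambda>y. \<Sum>i\<in>Basis. (inv (A y) (b y) \<bullet> i) *\<^sub>R dA i y h) U"
    proof (rule Ck_sum[OF U])
      fix i :: 'b assume "i \<in> Basis"
      show "Ck k (\<lambda>y. (inv (A y) (b y) \<bullet> i) *\<^sub>R dA i y h) U"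
        by (rule Ck_scaleR[OF U Ck_bounded_linear[OF U bounded_linear_inner_left w] dA_Ck[OF \<open>i \<in> Basis\<close>]])
    qed
  qed
  then show "Ck k (\<lambda>y. inv (A y) (frechet_derivative b (at y) h -
      (\<Sum>i\<in>Basis. (inv (A y) (b y) \<bullet> i) *\<^sub>R dA i y h))) U"
    by (rule solve)
qed

lemma Ck_frechet_derivative_compose_apply:
  fixes f :: "'b::euclidean_space \<Rightarrow> 'c::real_normed_vector"
  assumes U: "open U" and Om: "open Om" and \<Phi>: "Ck k \<Phi> U" "\<Phi> ` U \<subseteq> Om"
    and f: "smooth_on Om f" and c: "Ck k c U"
  shows "Ck k (\<lambda>y. frechet_derivative f (at (\<Phi> y)) (c y)) U"
proof -
  have "Ck k (\<lambda>y. \<Sum>l\<in>Basis. (c y \<bullet> l) *\<^sub>R frechet_derivative f (at (\<Phi> y)) l) U"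
  proof (rule Ck_sum[OF U])
    fix l :: 'b
    show "Ck k (\<lambda>y. (c y \<bullet> l) *\<^sub>R frechet_derivative f (at (\<Phi> y)) l) U"
      by (rule Ck_scaleR[OF U Ck_bounded_linear[OF U bounded_linear_inner_left c]
            Ck_compose[OF U Om \<Phi>(1) smooth_on_frechet_derivative[OF f] \<Phi>(2)]])
  qed
  then show ?thesis
  proof (rule Ck_cong[OF U, rotated])
    fix y assume "y \<in> U"
    then have "\<Phi> y \<in> Om" using \<Phi>(2) by blast
    have "linear (frechet_derivative f (at (\<Phi> y)))"
      by (rule has_derivative_linear[OF Ck_Suc_has_derivative[OF Om smooth_on_Ck[OF f] \<open>\<Phi> y \<in> Om\<close>]])
    then show "(\<Sum>l\<in>Basis. (c y \<bullet> l) *\<^sub>R frechet_derivative f (at (\<Phi> y)) l) =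
        frechet_derivative f (at (\<Phi> y)) (c y)"
      by (rule linear_eq_sum_Basis[symmetric])
  qed
qed

(* Bootstrap: \<Phi>' y = (\<Psi>' (\<Phi> y))^-1, and solving with A y = \<Psi>' (\<Phi> y) preserves C^k as long as
   \<Phi> is C^k; hence \<Phi> is C^(k+1). *)
lemma smooth_on_inverse:
  fixes \<Psi> \<Phi> :: "'b::euclidean_space \<Rightarrow> 'b"
  assumes Om: "open Om" and U: "open U" and s\<Psi>: "smooth_on Om \<Psi>" and \<Phi>U: "\<Phi> ` U \<subseteq> Om"
    and \<Psi>\<Phi>: "\<And>y. y \<in> U \<Longrightarrow> \<Psi> (\<Phi> y) = y" and c\<Phi>: "continuous_on U \<Phi>"
    and injD: "\<And>z. z \<in> Om \<Longrightarrow> inj (frechet_derivative \<Psi> (at z))"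
  shows "smooth_on U \<Phi>"
proof -
  define A where "A y = frechet_derivative \<Psi> (at (\<Phi> y))" for y
  define a where "a u z = frechet_derivative \<Psi> (at z) u" for u z
  have \<Phi>in: "\<Phi> y \<in> Om" if "y \<in> U" for y using \<Phi>U that by blast
  have d\<Psi>: "(\<Psi> has_derivative frechet_derivative \<Psi> (at z)) (at z)" if "z \<in> Om" for z
    using Ck_Suc_has_derivative[OF Om smooth_on_Ck[OF s\<Psi>] that] .
  have linA: "linear (A y)" if "y \<in> U" for y
    using d\<Psi>[OF \<Phi>in[OF that]] has_derivative_linear unfolding A_def by blast
  have injA: "inj (A y)" if "y \<in> U" for y
    using injD[OF \<Phi>in[OF that]] unfolding A_def .
  have sa: "smooth_on Om (a u)" for u unfolding a_def using smooth_on_frechet_derivative[OF s\<Psi>] .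
  have cA: "continuous_on U (\<lambda>y. A y u)" for u
    using Ck_compose[OF U Om _ sa \<Phi>U, of 0] c\<Phi> unfolding A_def a_def by simp
  have d\<Phi>: "(\<Phi> has_derivative inv (A y)) (at y)" if y: "y \<in> U" for y
  proof (rule has_derivative_inverse_basic[where f=\<Psi> and T=U])
    show "(\<Psi> has_derivative A y) (at (\<Phi> y))" unfolding A_def using d\<Psi>[OF \<Phi>in[OF y]] .
    show "bounded_linear (inv (A y))" using linear_inj_inv(4)[OF linA[OF y] injA[OF y]] .
    show "inv (A y) \<circ> A y = id" using linear_inj_inv(2)[OF linA[OF y] injA[OF y]] by (simp add: fun_eq_iff)
    show "continuous (at y) \<Phi>" using c\<Phi> U y by (simp add: continuous_on_eq_continuous_at)
  qed (use U y \<Psi>\<Phi> in auto)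
  have dA: "((\<lambda>y. A y i) has_derivative (\<lambda>h. frechet_derivative (a i) (at (\<Phi> y)) (inv (A y) h))) (at y)"
    if "y \<in> U" for i y
    using has_derivative_compose[OF d\<Phi>[OF that] Ck_Suc_has_derivative[OF Om smooth_on_Ck[OF sa] \<Phi>in[OF that]]]
    unfolding A_def a_def .
  have "Ck k \<Phi> U \<and> (\<forall>b. Ck k b U \<longrightarrow> Ck k (\<lambda>y. inv (A y) (b y)) U)" for k
  proof (induction k)
    case 0
    show ?case using c\<Phi> continuous_on_linear_solve[OF linA injA cA] by simp
  next
    case (Suc k)
    then have \<Phi>k: "Ck k \<Phi> U" and solve: "\<And>b. Ck k b U \<Longrightarrow> Ck k (\<lambda>y. inv (A y) (b y)) U"
      by blast+
    have dA_Ck: "Ck k (\<lambda>y. frechet_derivative (a i) (at (\<Phi> y)) (inv (A y) h)) U" for i h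
      by (rule Ck_frechet_derivative_compose_apply[OF U Om \<Phi>k \<Phi>U sa solve[OF Ck_const[OF U]]])
    have "Ck (Suc k) \<Phi> U" by (rule Ck_SucI[OF U d\<Phi> solve[OF Ck_const[OF U]]])
    moreover have "Ck (Suc k) (\<lambda>y. inv (A y) (b y)) U" if "Ck (Suc k) b U" for b
      by (rule Ck_Suc_linear_solve[OF U linA injA cA dA dA_Ck solve that])
    ultimately show ?case by blast
  qed
  then show ?thesis unfolding smooth_on_def by blast
qed

lemma Ck_fst: "open S \<Longrightarrow> Ck k fst S"
  using Ck_bounded_linear[OF _ bounded_linear_fst Ck_ident] by blast

lemma Ck_snd: "open S \<Longrightarrow> Ck k snd S"
  using Ck_bounded_linear[OF _ bounded_linear_snd Ck_ident] by blast

section \<open>Smooth functions\<close>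

lemma smooth_on_subset: "smooth_on S f \<Longrightarrow> T \<subseteq> S \<Longrightarrow> smooth_on T f"
  unfolding smooth_on_def using Ck_subset by blast

lemma smooth_on_const: "open S \<Longrightarrow> smooth_on S (\<lambda>x. c)"
  by (simp add: smooth_on_def Ck_const)

lemma smooth_on_fst: "open S \<Longrightarrow> smooth_on S fst"
  by (simp add: smooth_on_def Ck_fst)

lemma smooth_on_snd: "open S \<Longrightarrow> smooth_on S snd"
  by (simp add: smooth_on_def Ck_snd)

lemma smooth_on_add: "open S \<Longrightarrow> smooth_on S f \<Longrightarrow> smooth_on S g \<Longrightarrow> smooth_on S (\<lambda>x. f x + g x)"
  by (simp add: smooth_on_def Ck_add)

lemma smooth_on_scaleR: "open S \<Longrightarrow> smooth_on S a \<Longrightarrow> smooth_on S b \<Longrightarrow> smooth_on S (\<lambda>x. a x *\<^sub>R b x)"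
  by (simp add: smooth_on_def Ck_scaleR)

lemma smooth_on_sum: "open S \<Longrightarrow> (\<And>i. i \<in> I \<Longrightarrow> smooth_on S (f i)) \<Longrightarrow> smooth_on S (\<lambda>x. \<Sum>i\<in>I. f i x)"
  by (simp add: smooth_on_def Ck_sum)

lemma smooth_on_Pair: "open S \<Longrightarrow> smooth_on S f \<Longrightarrow> smooth_on S g \<Longrightarrow> smooth_on S (\<lambda>x. (f x, g x))"
  by (simp add: smooth_on_def Ck_Pair)

lemma smooth_on_compose:
  fixes g :: "'a::euclidean_space \<Rightarrow> 'b::euclidean_space"
  shows "open S \<Longrightarrow> open T \<Longrightarrow> smooth_on S g \<Longrightarrow> smooth_on T f \<Longrightarrow> g ` S \<subseteq> T \<Longrightarrow> smooth_on S (\<lambda>x. f (g x))"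
  by (simp add: smooth_on_def Ck_compose)

lemma smooth_on_inverse_open:
  fixes \<Psi> :: "'a::euclidean_space \<Rightarrow> 'a"
  assumes Om: "open Om" and \<Psi>: "smooth_on Om \<Psi>"
    and \<Phi>\<Psi>: "\<And>z. z \<in> Om \<Longrightarrow> \<Phi> (\<Psi> z) = z"
    and inj_D: "\<And>z. z \<in> Om \<Longrightarrow> inj (frechet_derivative \<Psi> (at z))"
  shows "open (\<Psi> ` Om)" and "smooth_on (\<Psi> ` Om) \<Phi>"
proof -
  have cont: "continuous_on Om \<Psi>" using smooth_on_Ck[OF \<Psi>, of 0] by simp
  show U: "open (\<Psi> ` Om)"
    by (rule invariance_of_domain[OF cont Om inj_on_inverseI[where g=\<Phi>, OF \<Phi>\<Psi>]])
  show "smooth_on (\<Psi> ` Om) \<Phi>"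
    by (rule smooth_on_inverse[OF Om U \<Psi> _ _ continuous_on_inverse_open[OF Om cont _ \<Phi>\<Psi>] inj_D])
      (use \<Phi>\<Psi> in auto)
qed

lemma Ck_Suc_derivative_bounded:
  fixes f :: "'a::euclidean_space \<Rightarrow> 'b::real_normed_vector"
  assumes "open S" "Ck (Suc 0) f S" "compact C" "C \<subseteq> S"
  obtains B where "0 < B" "\<And>p h. p \<in> C \<Longrightarrow> norm (frechet_derivative f (at p) h) \<le> B * norm h"
proof -
  define N where "N p = (\<Sum>i\<in>Basis. norm (frechet_derivative f (at p) i))" for p
  have "continuous_on C N"
    unfolding N_def
  proof (intro continuous_on_sum continuous_on_norm)
    fix i :: 'a
    have "Ck 0 (\<lambda>p. frechet_derivative f (at p) i) S"
      using assms(2) by simp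
    then show "continuous_on C (\<lambda>p. frechet_derivative f (at p) i)"
      using assms(4) continuous_on_subset by (metis Ck.simps(1))
  qed
  then have "bounded (N ` C)"
    using compact_imp_bounded compact_continuous_image assms(3) by blast
  then obtain B where B: "0 < B" "\<And>p. p \<in> C \<Longrightarrow> N p \<le> B"
    unfolding bounded_pos using abs_le_D1 by fastforce
  show thesis
  proof (rule that[OF B(1)])
    fix p h assume p: "p \<in> C"
    have "linear (frechet_derivative f (at p))"
      using Ck_Suc_has_derivative[OF assms(1,2)] p assms(4) has_derivative_linear by blast
    then have "norm (frechet_derivative f (at p) h - 0) \<le> N p * norm h"
      using norm_linear_diff_le[OF _ linear_zero] unfolding N_def by simp
    also have "\<dots> \<le> B * norm h" using B(2)[OF p] by (simp add: mult_right_mono)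
    finally show "norm (frechet_derivative f (at p) h) \<le> B * norm h" by simp
  qed
qed

lemma smooth_on_funpow_param:
  fixes f :: "'p::euclidean_space \<Rightarrow> 'a::euclidean_space \<Rightarrow> 'a"
  assumes S: "open S" and T: "open T" and f: "smooth_on T (\<lambda>(x, e). f e x)"
    and orbit: "\<And>p j. p \<in> S \<Longrightarrow> j < n \<Longrightarrow> ((f (snd p) ^^ j) (fst p), snd p) \<in> T"
  shows "j \<le> n \<Longrightarrow> smooth_on S (\<lambda>p. (f (snd p) ^^ j) (fst p))"
proof (induction j)
  case 0
  show ?case using smooth_on_fst[OF S] by simp
next
  case (Suc j)
  have "smooth_on S (\<lambda>p. (\<lambda>(x, e). f e x) ((f (snd p) ^^ j) (fst p), snd p))"
    by (rule smooth_on_compose[OF S T smooth_on_Pair[OF S Suc.IH smooth_on_snd[OF S]] f])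
      (use Suc.prems orbit in auto)
  then show ?case by simp
qed

section \<open>Maps close to the identity\<close>

lemma norm_funpow_diff_le:
  fixes f :: "'a::real_normed_vector \<Rightarrow> 'a"
  assumes step: "\<And>y. norm (y - x) \<le> R \<Longrightarrow> norm (f y - y) \<le> c" and c: "0 \<le> c"
  shows "real k * c \<le> R \<Longrightarrow> norm ((f ^^ k) x - x) \<le> real k * c"
proof (induction k)
  case 0 then show ?case by simp
next
  case (Suc k)
  have kR: "real k * c \<le> R" using Suc.prems c by (simp add: algebra_simps)
  have IH: "norm ((f ^^ k) x - x) \<le> real k * c" by (rule Suc.IH[OF kR])
  have "norm ((f ^^ Suc k) x - x) \<le> norm (f ((f ^^ k) x) - (f ^^ k) x) + norm ((f ^^ k) x - x)"
    using norm_triangle_ineq[of "f ((f ^^ k) x) - (f ^^ k) x" "(f ^^ k) x - x"] by simp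
  also have "\<dots> \<le> c + real k * c"
    using step[OF order_trans[OF IH kR]] IH by (rule add_mono)
  finally show ?case by (simp add: algebra_simps)
qed

lemma near_identity_preimage:
  fixes g :: "'a::banach \<Rightarrow> 'a"
  assumes M: "0 \<le> M" and L: "0 \<le> L" "\<bar>e\<bar> * L < 1"
    and bound: "\<And>z. z \<in> cball y (\<bar>e\<bar> * M) \<Longrightarrow> norm (g z) \<le> M"
    and lip: "\<And>z z'. z \<in> cball y (\<bar>e\<bar> * M) \<Longrightarrow> z' \<in> cball y (\<bar>e\<bar> * M) \<Longrightarrow>
      norm (g z - g z') \<le> L * norm (z - z')"
  shows "\<exists>z. dist y z \<le> \<bar>e\<bar> * M \<and> z + e *\<^sub>R g z = y"
proof -
  define B where "B = cball y (\<bar>e\<bar> * M)"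
  define T where "T z = y - e *\<^sub>R g z" for z
  have "T ` B \<subseteq> B"
  proof
    fix u assume "u \<in> T ` B"
    then obtain z where z: "z \<in> B" "u = T z" by blast
    have "dist y u = \<bar>e\<bar> * norm (g z)" using z(2) by (simp add: T_def dist_norm)
    also have "\<dots> \<le> \<bar>e\<bar> * M" using bound z(1) unfolding B_def by (simp add: mult_left_mono)
    finally show "u \<in> B" unfolding B_def by simp
  qed
  moreover have "dist (T z) (T z') \<le> (\<bar>e\<bar> * L) * dist z z'" if "z \<in> B" "z' \<in> B" for z z'
  proof -
    have "dist (T z) (T z') = \<bar>e\<bar> * norm (g z - g z')"
      unfolding T_def dist_norm by (simp add: algebra_simps norm_minus_commute flip: scaleR_diff_right)
    also have "\<dots> \<le> \<bar>e\<bar> * (L * norm (z - z'))"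
      using lip that unfolding B_def by (simp add: mult_left_mono)
    finally show ?thesis by (simp add: dist_norm mult.assoc)
  qed
  moreover have "0 \<le> \<bar>e\<bar> * M" using M by simp
  ultimately have "\<exists>!z\<in>B. T z = z"
    using L by (intro Banach_fix) (auto simp: B_def complete_eq_closed)
  then obtain z where "z \<in> B" "T z = z" by blast
  then show ?thesis unfolding B_def T_def by (auto simp: diff_eq_eq)
qed

lemma inj_on_near_identity:
  fixes g :: "'a::real_normed_vector \<Rightarrow> 'a"
  assumes small: "\<bar>e\<bar> * L < 1" "2 * \<bar>e\<bar> * M \<le> \<rho>"
    and bound: "\<And>x. x \<in> V \<Longrightarrow> norm (g x) \<le> M"
    and lip: "\<And>x y. x \<in> V \<Longrightarrow> y \<in> V \<Longrightarrow> norm (x - y) \<le> \<rho> \<Longrightarrow> norm (g x - g y) \<le> L * norm (x - y)"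
  shows "inj_on (\<lambda>x. x + e *\<^sub>R g x) V"
proof (rule inj_onI)
  fix x y assume xy: "x \<in> V" "y \<in> V" "x + e *\<^sub>R g x = y + e *\<^sub>R g y"
  then have "x - y = e *\<^sub>R (g y - g x)" by (simp add: algebra_simps)
  then have diff: "norm (x - y) = \<bar>e\<bar> * norm (g x - g y)" by (simp add: norm_minus_commute)
  have "norm (g x - g y) \<le> 2 * M"
    using norm_triangle_ineq4[of "g x" "g y"] bound[OF xy(1)] bound[OF xy(2)] by linarith
  then have "\<bar>e\<bar> * norm (g x - g y) \<le> \<bar>e\<bar> * (2 * M)" by (rule mult_left_mono) simp
  then have "norm (x - y) \<le> \<rho>" using diff small(2) by simp
  then have "norm (x - y) \<le> (\<bar>e\<bar> * L) * norm (x - y)"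
    using diff lip[OF xy(1,2)] by (simp add: mult_left_mono mult.assoc)
  then have "(1 - \<bar>e\<bar> * L) * norm (x - y) \<le> 0" by (simp add: algebra_simps)
  then have "norm (x - y) \<le> 0" using small(1) by (simp add: mult_le_0_iff)
  then show "x = y" by simp
qed

lemma compact_neighbourhood_in_open:
  fixes D0 :: "'a::euclidean_space set"
  assumes "compact D0" "open D" "D0 \<subseteq> D"
  obtains \<delta> K where "0 < \<delta>" "compact K" "K \<subseteq> D" "\<forall>x\<in>D0. \<forall>y. dist x y \<le> \<delta> \<longrightarrow> y \<in> K"
proof -
  obtain \<delta> where \<delta>: "0 < \<delta>" "(\<Union>x\<in>D0. cball x \<delta>) \<subseteq> D"
    using compact_subset_open_imp_cball_epsilon_subset[OF assms] by blast
  define K where "K = (\<lambda>p. fst p + snd p) ` (D0 \<times> cball 0 \<delta>)"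
  show thesis
  proof (rule that[OF \<delta>(1)])
    show "compact K"
      unfolding K_def by (intro compact_continuous_image compact_Times assms(1) compact_cball continuous_intros)
    show "K \<subseteq> D"
    proof
      fix y assume "y \<in> K"
      then obtain x u where "x \<in> D0" "norm u \<le> \<delta>" "y = x + u" unfolding K_def by auto
      then have "y \<in> cball x \<delta>" by (simp add: dist_norm)
      then show "y \<in> D" using \<delta>(2) \<open>x \<in> D0\<close> by blast
    qed
    show "\<forall>x\<in>D0. \<forall>y. dist x y \<le> \<delta> \<longrightarrow> y \<in> K"
    proof (intro ballI allI impI)
      fix x y assume "x \<in> D0" "dist x y \<le> \<delta>"
      then have "(x, y - x) \<in> D0 \<times> cball 0 \<delta>" by (simp add: dist_commute dist_norm)
      then show "y \<in> K" unfolding K_def by (rule image_eqI[rotated]) simp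
    qed
  qed
qed

section \<open>The interpolating vector field\<close>

lemma alternating_binomial_partial_sum: "(\<Sum>i\<le>m. (-1)^i * real (Suc N choose i)) = (-1)^m * real (N choose m)"
proof (induction m)
  case 0 then show ?case by simp
next
  case (Suc m)
  have "(\<Sum>i\<le>Suc m. (-1)^i * real (Suc N choose i)) = (-1)^m * real (N choose m) + (-1)^Suc m * real (Suc N choose Suc m)"
    using Suc by simp
  also have "\<dots> = (-1)^Suc m * real (N choose Suc m)"
    by (simp add: algebra_simps)
  finally show ?case .
qed

lemma alternating_binomial_upper_half:
  assumes "n \<ge> 1"
  shows "(\<Sum>k=1..n. (-1)^(k+1) * real (2*n choose (n+k))) = real (2*n - 1 choose n)"
proof -
  define f where "f i = (-1::real)^i * real (2*n choose i)" for i
  have e: "Suc (2*n - 1) = 2*n" using assms by simp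
  have full: "(\<Sum>i\<le>2*n. f i) = 0"
    using alternating_binomial_partial_sum[where m="2*n" and N="2*n-1"] assms unfolding f_def e by simp
  have half: "(\<Sum>i\<le>n. f i) = (-1)^n * real (2*n - 1 choose n)"
    using alternating_binomial_partial_sum[where m=n and N="2*n-1"] unfolding f_def e by simp
  have split: "(\<Sum>i\<le>2*n. f i) = (\<Sum>i\<le>n. f i) + (\<Sum>k=1..n. f (k + n))"
  proof -
    have "(\<Sum>i\<le>2*n. f i) = (\<Sum>i=0..n+n. f i)" by (simp add: atLeast0AtMost mult_2)
    also have "\<dots> = (\<Sum>i=0..n. f i) + (\<Sum>i=n+1..n+n. f i)" by (rule sum.ub_add_nat) simp
    also have "(\<Sum>i=n+1..n+n. f i) = (\<Sum>k=1..n. f (k + n))"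
      using sum.shift_bounds_cl_nat_ivl[of f 1 n n] by (simp add: add.commute)
    finally show ?thesis by (simp add: atLeast0AtMost)
  qed
  have s: "(\<Sum>k=1..n. f (k + n)) = - ((-1)^n * real (2*n - 1 choose n))"
    using full half split by simp
  have "(\<Sum>k=1..n. (-1)^(k+1) * real (2*n choose (n+k))) = (-1)^(n+1) * (\<Sum>k=1..n. f (k + n))"
  proof -
    have "(-1::real)^(k+1) * real (2*n choose (n+k)) = (-1)^(n+1) * f (k + n)" for k
    proof -
      have "(-1::real)^(n+1) * (-1)^(k+n) = (-1)^(k+1) * ((-1)^n)^2"
        by (simp add: power_add power2_eq_square)
      moreover have "((-1::real)^n)^2 = 1" by (induct n) (auto simp: power2_eq_square)
      ultimately show ?thesis unfolding f_def by (simp add: add.commute mult.assoc[symmetric])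
    qed
    then show ?thesis by (simp add: sum_distrib_left)
  qed
  also have "\<dots> = real (2*n - 1 choose n)"
    unfolding s by (simp add: power_add power2_eq_square[symmetric])
  finally show ?thesis .
qed

lemma sum_pcoef_mult_2k:
  assumes "n \<ge> 1"
  shows "(\<Sum>k=1..n. pcoef n k * (2 * real k)) = 1"
proof -
  have nz: "fact (2*n) \<noteq> (0::real)" by simp
  have c: "real (2*n choose (n+k)) = fact (2*n) / (fact (n+k) * fact (n-k))" if "k \<le> n" for k
  proof -
    have "2*n - (n+k) = n - k" by simp
    then show ?thesis using binomial_fact[of "n+k" "2*n"] that by simp
  qed
  have t: "pcoef n k * (2 * real k) = (2 * ((fact n)^2 / fact (2*n))) * ((-1)^(k+1) * real (2*n choose (n+k)))"
    if "k \<in> {1..n}" for k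
  proof -
    have "k \<le> n" "k \<ge> 1" using that by auto
    then show ?thesis unfolding pcoef_def c[OF \<open>k \<le> n\<close>] using nz by (simp add: field_simps)
  qed
  have "(\<Sum>k=1..n. pcoef n k * (2 * real k)) = (\<Sum>k=1..n. (2 * ((fact n)^2 / fact (2*n))) * ((-1)^(k+1) * real (2*n choose (n+k))))"
    by (rule sum.cong[OF refl t])
  also have "\<dots> = (2 * ((fact n)^2 / fact (2*n))) * (\<Sum>k=1..n. (-1)^(k+1) * real (2*n choose (n+k)))"
    by (rule sum_distrib_left[symmetric])
  also have "\<dots> = 2 * real (2*n - 1 choose n) * ((fact n)^2 / fact (2*n))"
    unfolding alternating_binomial_upper_half[OF assms] by simp
  also have "2 * real (2*n - 1 choose n) = real (2*n choose n)"
  proof -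
    obtain m where m: "n = Suc m" using assms by (cases n) auto
    have "2*n - 1 = Suc (2*m)" "2*n = Suc (Suc (2*m))" using m by simp_all
    moreover have "(Suc (2*m) choose Suc m) = (Suc (2*m) choose m)"
      using binomial_symmetric[of m "Suc (2*m)"] by simp
    ultimately show ?thesis using m by (simp add: binomial_Suc_Suc)
  qed
  also have "real (2*n choose n) * ((fact n)^2 / fact (2*n)) = 1"
    using c[of 0] nz by (simp add: power2_eq_square)
  finally show ?thesis .
qed

(* X_n with the factor 1/e removed: since x_(j+1) - x_j = e G(x_j), the difference
   x_k - x_(-k) telescopes into e times the inner sum. *)
definition interp_field_ext ::
  "(real \<Rightarrow> 'a \<Rightarrow> 'a) \<Rightarrow> (real \<Rightarrow> 'a \<Rightarrow> 'a) \<Rightarrow> (real \<Rightarrow> 'a \<Rightarrow> 'a::real_vector) \<Rightarrow> nat \<Rightarrow> 'a \<Rightarrow> real \<Rightarrow> 'a"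
  where "interp_field_ext F Finv G n x e =
    (\<Sum>k=1..n. pcoef n k *\<^sub>R (\<Sum>j<k. G e ((F e ^^ j) x) + G e ((Finv e ^^ Suc j) x)))"

lemma interp_field_eq_ext:
  fixes F Finv G :: "real \<Rightarrow> 'a \<Rightarrow> 'a::real_vector"
  assumes "e \<noteq> 0"
    and fwd: "\<And>j. j < n \<Longrightarrow> (F e ^^ Suc j) x = (F e ^^ j) x + e *\<^sub>R G e ((F e ^^ j) x)"
    and bwd: "\<And>j. j < n \<Longrightarrow> (Finv e ^^ j) x = (Finv e ^^ Suc j) x + e *\<^sub>R G e ((Finv e ^^ Suc j) x)"
  shows "interp_field F Finv n x e = interp_field_ext F Finv G n x e"
proof -
  have diff: "(F e ^^ k) x - (Finv e ^^ k) x =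
      e *\<^sub>R (\<Sum>j<k. G e ((F e ^^ j) x) + G e ((Finv e ^^ Suc j) x))" if "k \<le> n" for k
  proof -
    have "(F e ^^ k) x - (Finv e ^^ k) x =
        (\<Sum>j<k. (F e ^^ Suc j) x - (F e ^^ j) x) + (\<Sum>j<k. (Finv e ^^ j) x - (Finv e ^^ Suc j) x)"
      unfolding sum_lessThan_telescope[of "\<lambda>j. (F e ^^ j) x" k]
        sum_lessThan_telescope'[of "\<lambda>j. (Finv e ^^ j) x" k] by simp
    also have "\<dots> = (\<Sum>j<k. e *\<^sub>R G e ((F e ^^ j) x)) + (\<Sum>j<k. e *\<^sub>R G e ((Finv e ^^ Suc j) x))"
    proof (intro arg_cong2[where f="(+)"] sum.cong refl)
      fix j assume "j \<in> {..<k}"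
      then have "j < n" using that by simp
      show "(F e ^^ Suc j) x - (F e ^^ j) x = e *\<^sub>R G e ((F e ^^ j) x)"
        using fwd[OF \<open>j < n\<close>] by (simp only: add_diff_cancel_left')
      show "(Finv e ^^ j) x - (Finv e ^^ Suc j) x = e *\<^sub>R G e ((Finv e ^^ Suc j) x)"
        using bwd[OF \<open>j < n\<close>] by (simp only: add_diff_cancel_left')
    qed
    finally show ?thesis by (simp add: scaleR_sum_right sum.distrib scaleR_add_right)
  qed
  have "interp_field F Finv n x e =
      (1 / e) *\<^sub>R (\<Sum>k=1..n. pcoef n k *\<^sub>R (e *\<^sub>R (\<Sum>j<k. G e ((F e ^^ j) x) + G e ((Finv e ^^ Suc j) x))))"
    unfolding interp_field_def using diff by simp
  also have "\<dots> = interp_field_ext F Finv G n x e"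
    using \<open>e \<noteq> 0\<close> by (simp add: interp_field_ext_def scaleR_sum_right)
  finally show ?thesis .
qed

lemma funpow_fixpoint: "f x = x \<Longrightarrow> (f ^^ n) x = x"
  by (induction n) simp_all

lemma interp_field_ext_at_fixpoint:
  assumes "1 \<le> n" "F 0 x = x" "Finv 0 x = x"
  shows "interp_field_ext F Finv G n x 0 = G 0 x"
proof -
  have inner: "(\<Sum>j<k. G 0 ((F 0 ^^ j) x) + G 0 ((Finv 0 ^^ Suc j) x)) = (2 * real k) *\<^sub>R G 0 x" for k
    using funpow_fixpoint[of "F 0", OF assms(2)] funpow_fixpoint[of "Finv 0", OF assms(3)] assms(3)
    by (simp add: sum_constant_scaleR scaleR_2 scaleR_add_right flip: scaleR_scaleR)
  have "interp_field_ext F Finv G n x 0 = (\<Sum>k=1..n. (pcoef n k * (2 * real k)) *\<^sub>R G 0 x)"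
    unfolding interp_field_ext_def inner scaleR_scaleR ..
  also have "\<dots> = G 0 x"
    unfolding scaleR_sum_left[symmetric] sum_pcoef_mult_2k[OF assms(1)] by simp
  finally show ?thesis .
qed

locale near_identity_family =
  fixes D :: "'a::euclidean_space set" and \<epsilon>0 :: real and F G :: "real \<Rightarrow> 'a \<Rightarrow> 'a"
  assumes open_D: "open D" and \<epsilon>0_pos: "0 < \<epsilon>0"
    and smooth_F: "smooth_on (D \<times> {-\<epsilon>0<..<\<epsilon>0}) (\<lambda>(x, e). F e x)"
    and smooth_G: "smooth_on (D \<times> {-\<epsilon>0<..<\<epsilon>0}) (\<lambda>(x, e). G e x)"
    and F_eq: "\<And>x e. x \<in> D \<Longrightarrow> \<bar>e\<bar> < \<epsilon>0 \<Longrightarrow> F e x = x + e *\<^sub>R G e x"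
begin

abbreviation DG :: "'a \<times> real \<Rightarrow> 'a \<times> real \<Rightarrow> 'a"
  where "DG p \<equiv> frechet_derivative (\<lambda>(x, e). G e x) (at p)"

lemma open_domain: "open (D \<times> {-\<epsilon>0<..<\<epsilon>0})"
  using open_D by (simp add: open_Times)

lemma G_has_derivative:
  "(x, e) \<in> D \<times> {-\<epsilon>0<..<\<epsilon>0} \<Longrightarrow> ((\<lambda>(x, e). G e x) has_derivative DG (x, e)) (at (x, e))"
  by (rule Ck_Suc_has_derivative[OF open_domain smooth_on_Ck[OF smooth_G]])

lemma smooth_on_G_along:
  assumes S: "open S" and "smooth_on S \<phi>" and "\<And>p. p \<in> S \<Longrightarrow> (\<phi> p, snd p) \<in> D \<times> {-\<epsilon>0<..<\<epsilon>0}"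
  shows "smooth_on S (\<lambda>p. G (snd p) (\<phi> p))"
proof -
  have "(\<lambda>p. (\<phi> p, snd p)) ` S \<subseteq> D \<times> {-\<epsilon>0<..<\<epsilon>0}" using assms(3) by blast
  from smooth_on_compose[OF S open_domain smooth_on_Pair[OF S assms(2) smooth_on_snd[OF S]] smooth_G this]
  show ?thesis by simp
qed

end

(* The last two assumptions say that n steps of F e with
   n |e| <= r0 move a point by at most \<delta>/4, and that e G is a contraction with constant 1/2. *)
locale near_identity_estimates = near_identity_family +
  fixes D0 K :: "'a set" and \<delta> M L r0 :: real
  assumes \<delta>_pos: "0 < \<delta>"
    and K_neighbourhood: "\<And>x y. x \<in> D0 \<Longrightarrow> dist x y \<le> 4 * \<delta> \<Longrightarrow> y \<in> K"
    and K_subset_D: "K \<subseteq> D"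
    and r0_pos: "0 < r0" and r0_less: "r0 < \<epsilon>0"
    and M_nonneg: "0 \<le> M" and L_nonneg: "0 \<le> L"
    and G_bound: "\<And>x e. x \<in> K \<Longrightarrow> \<bar>e\<bar> \<le> r0 \<Longrightarrow> norm (G e x) \<le> M"
    and DG_bound: "\<And>x e h. x \<in> K \<Longrightarrow> \<bar>e\<bar> \<le> r0 \<Longrightarrow>
      norm (frechet_derivative (\<lambda>(x, e). G e x) (at (x, e)) h) \<le> L * norm h"
    and r0_M: "r0 * M \<le> \<delta> / 4" and r0_L: "r0 * L \<le> 1 / 2"

lemma (in near_identity_family) near_identity_estimates_exist:
  assumes "compact D0" "D0 \<subseteq> D"
  shows "\<exists>K \<delta> M L r0. near_identity_estimates D \<epsilon>0 F G D0 K \<delta> M L r0"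
proof -
  obtain \<delta>0 K where K: "0 < \<delta>0" "compact K" "K \<subseteq> D" "\<forall>x\<in>D0. \<forall>y. dist x y \<le> \<delta>0 \<longrightarrow> y \<in> K"
    by (rule compact_neighbourhood_in_open[OF assms(1) open_D assms(2)])
  define \<epsilon>1 where "\<epsilon>1 = \<epsilon>0 / 2"
  define C where "C = K \<times> {-\<epsilon>1..\<epsilon>1}"
  have C: "compact C" "C \<subseteq> D \<times> {-\<epsilon>0<..<\<epsilon>0}"
    unfolding C_def \<epsilon>1_def using K(2,3) \<epsilon>0_pos by (auto simp: compact_Times)
  have "continuous_on C (\<lambda>(x, e). G e x)"
    using smooth_on_Ck[OF smooth_G, of 0] C(2) continuous_on_subset by (metis Ck.simps(1))
  then have "bounded ((\<lambda>(x, e). G e x) ` C)"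
    by (rule compact_imp_bounded[OF compact_continuous_image[OF _ C(1)]])
  then obtain M where M: "0 < M" "\<And>x e. (x, e) \<in> C \<Longrightarrow> norm (G e x) \<le> M"
    unfolding bounded_pos by fastforce
  obtain L where L: "0 < L" "\<And>p h. p \<in> C \<Longrightarrow> norm (DG p h) \<le> L * norm h"
    using Ck_Suc_derivative_bounded[OF open_domain smooth_on_Ck[OF smooth_G] C] by blast
  define r0 where "r0 = min \<epsilon>1 (min (\<delta>0 / (16 * M)) (1 / (2 * L)))"
  have r0: "0 < r0" "r0 \<le> \<epsilon>1" "r0 * M \<le> \<delta>0 / 16" "r0 * L \<le> 1 / 2"
  proof -
    show "0 < r0" unfolding r0_def \<epsilon>1_def using \<epsilon>0_pos K(1) M(1) L(1) by simp
    show "r0 \<le> \<epsilon>1" unfolding r0_def by simp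
    have "r0 \<le> \<delta>0 / (16 * M)" unfolding r0_def by simp
    then show "r0 * M \<le> \<delta>0 / 16" using M(1) by (simp add: field_simps)
    have "r0 \<le> 1 / (2 * L)" unfolding r0_def by simp
    then show "r0 * L \<le> 1 / 2" using L(1) by (simp add: field_simps)
  qed
  have in_C: "(x, e) \<in> C" if "x \<in> K" "\<bar>e\<bar> \<le> r0" for x e
    using that r0(2) unfolding C_def by (auto simp: abs_le_iff)
  have "near_identity_estimates D \<epsilon>0 F G D0 K (\<delta>0 / 4) M L r0"
  proof (rule near_identity_estimates.intro[OF near_identity_family_axioms], unfold_locales)
    show "0 < \<delta>0 / 4" using K(1) by simp
    show "y \<in> K" if "x \<in> D0" "dist x y \<le> 4 * (\<delta>0 / 4)" for x y using K(4) that by auto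
    show "K \<subseteq> D" by (fact K(3))
    show "0 < r0" by (fact r0(1))
    show "r0 < \<epsilon>0" using r0(2) \<epsilon>0_pos unfolding \<epsilon>1_def by simp
    show "0 \<le> M" "0 \<le> L" using M(1) L(1) by simp_all
    show "norm (G e x) \<le> M" if "x \<in> K" "\<bar>e\<bar> \<le> r0" for x e using M(2) in_C that by blast
    show "norm (DG (x, e) h) \<le> L * norm h" if "x \<in> K" "\<bar>e\<bar> \<le> r0" for x e h
      using L(2) in_C that by blast
    show "r0 * M \<le> \<delta>0 / 4 / 4" "r0 * L \<le> 1 / 2" using r0(3,4) by simp_all
  qed
  then show ?thesis by blast
qed

context near_identity_estimates
begin

definition V :: "'a set" where "V = (\<Union>x\<in>D0. ball x (2 * \<delta>))"

definition W :: "'a set" where "W = (\<Union>x\<in>D0. ball x \<delta>)"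

definition Finv :: "real \<Rightarrow> 'a \<Rightarrow> 'a" where "Finv e = the_inv_into V (F e)"

lemma open_V: "open V" and open_W: "open W"
  unfolding V_def W_def by auto

lemma D0_subset_W: "D0 \<subseteq> W"
  using \<delta>_pos unfolding W_def by force

lemma W_subset_V: "W \<subseteq> V"
  using \<delta>_pos unfolding W_def V_def by force

lemma near_D0_in_V: "x0 \<in> D0 \<Longrightarrow> dist x0 y < 3 * \<delta> / 2 \<Longrightarrow> y \<in> V"
  unfolding V_def using \<delta>_pos by force

lemma V_subset_K: "V \<subseteq> K"
  unfolding V_def using K_neighbourhood \<delta>_pos by force

lemma V_subset_D: "V \<subseteq> D"
  using V_subset_K K_subset_D by blast

lemma small_parameter:
  assumes "\<bar>e\<bar> \<le> r0"
  shows "\<bar>e\<bar> < \<epsilon>0" "\<bar>e\<bar> * M \<le> \<delta> / 4" "\<bar>e\<bar> * L \<le> 1 / 2"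
proof -
  show "\<bar>e\<bar> < \<epsilon>0" using assms r0_less by simp
  show "\<bar>e\<bar> * M \<le> \<delta> / 4" using mult_right_mono[OF assms M_nonneg] r0_M by simp
  show "\<bar>e\<bar> * L \<le> 1 / 2" using mult_right_mono[OF assms L_nonneg] r0_L by simp
qed

lemma F_eq_on_K: "x \<in> K \<Longrightarrow> \<bar>e\<bar> \<le> r0 \<Longrightarrow> F e x = x + e *\<^sub>R G e x"
  using F_eq K_subset_D small_parameter(1) by blast

lemma G_lipschitz:
  assumes "convex S" "S \<subseteq> K" "\<bar>e\<bar> \<le> r0" "z \<in> S" "z' \<in> S"
  shows "norm (G e z - G e z') \<le> L * norm (z - z')"
proof (rule differentiable_bound[OF assms(1) _ _ assms(4,5)])
  fix y assume "y \<in> S"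
  then have yK: "y \<in> K" using assms(2) by blast
  then have "(y, e) \<in> D \<times> {-\<epsilon>0<..<\<epsilon>0}" using K_subset_D small_parameter(1)[OF assms(3)] by auto
  have "((\<lambda>u. (u, e)) has_derivative (\<lambda>u. (u, 0))) (at y within S)"
    by (intro has_derivative_Pair has_derivative_ident has_derivative_const)
  from has_derivative_compose[OF this G_has_derivative[OF \<open>(y, e) \<in> _\<close>]]
  show "(G e has_derivative (\<lambda>u. DG (y, e) (u, 0))) (at y within S)" by simp
  show "onorm (\<lambda>u. DG (y, e) (u, 0)) \<le> L"
  proof (rule onorm_le)
    fix u
    show "norm (DG (y, e) (u, 0)) \<le> L * norm u" using DG_bound[OF yK assms(3), of "(u, 0)"] by simp
  qed
qed

lemma inj_on_F:
  assumes "\<bar>e\<bar> \<le> r0"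
  shows "inj_on (F e) V"
proof -
  have "inj_on (\<lambda>x. x + e *\<^sub>R G e x) V"
  proof (rule inj_on_near_identity[where L=L and M=M and \<rho>=\<delta>])
    show "\<bar>e\<bar> * L < 1" using small_parameter(3)[OF assms] by simp
    show "2 * \<bar>e\<bar> * M \<le> \<delta>" using small_parameter(2)[OF assms] \<delta>_pos by simp
    show "norm (G e x) \<le> M" if "x \<in> V" for x using G_bound V_subset_K that assms by blast
    show "norm (G e x - G e y) \<le> L * norm (x - y)" if xy: "x \<in> V" "y \<in> V" "norm (x - y) \<le> \<delta>" for x y
    proof -
      obtain x0 where x0: "x0 \<in> D0" "dist x0 x < 2 * \<delta>" using xy(1) unfolding V_def by auto
      have "dist x0 y \<le> 3 * \<delta>"
        using dist_triangle[of x0 y x] x0(2) xy(3) by (simp add: dist_norm)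
      moreover have "dist x0 x \<le> 3 * \<delta>" using x0(2) \<delta>_pos by linarith
      ultimately have "x \<in> cball x0 (3 * \<delta>)" "y \<in> cball x0 (3 * \<delta>)" by simp_all
      moreover have "cball x0 (3 * \<delta>) \<subseteq> K" using K_neighbourhood[OF x0(1)] \<delta>_pos by auto
      ultimately show ?thesis using G_lipschitz[OF convex_cball _ assms] by blast
    qed
  qed
  moreover have "inj_on (F e) V = inj_on (\<lambda>x. x + e *\<^sub>R G e x) V"
    by (rule inj_on_cong) (use F_eq_on_K V_subset_K assms in blast)
  ultimately show ?thesis by simp
qed

lemma F_preimage:
  assumes "x0 \<in> D0" "dist x0 y < 3 * \<delta> / 2" "\<bar>e\<bar> \<le> r0"
  shows "\<exists>z\<in>V. F e z = y \<and> dist y z \<le> \<bar>e\<bar> * M"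
proof -
  define B where "B = cball y (\<bar>e\<bar> * M)"
  have B_near: "dist x0 z < 7 * \<delta> / 4" if "z \<in> B" for z
    using dist_triangle[of x0 z y] assms(2) small_parameter(2)[OF assms(3)] that unfolding B_def by simp
  have BK: "B \<subseteq> K" using B_near K_neighbourhood[OF assms(1)] \<delta>_pos by force
  have "\<exists>z. dist y z \<le> \<bar>e\<bar> * M \<and> z + e *\<^sub>R G e z = y"
  proof (rule near_identity_preimage[OF M_nonneg L_nonneg])
    show "\<bar>e\<bar> * L < 1" using small_parameter(3)[OF assms(3)] by simp
    show "norm (G e z) \<le> M" if "z \<in> cball y (\<bar>e\<bar> * M)" for z
      using G_bound BK that assms(3) unfolding B_def by blast
    show "norm (G e z - G e z') \<le> L * norm (z - z')"
      if "z \<in> cball y (\<bar>e\<bar> * M)" "z' \<in> cball y (\<bar>e\<bar> * M)" for z z'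
      using G_lipschitz[OF convex_cball BK[unfolded B_def] assms(3) that] .
  qed
  then obtain z where z: "dist y z \<le> \<bar>e\<bar> * M" "z + e *\<^sub>R G e z = y" by blast
  then have "z \<in> B" unfolding B_def by simp
  then have "z \<in> V" using near_D0_in_V[OF assms(1)] B_near \<delta>_pos
    unfolding V_def using assms(1) by force
  moreover have "F e z = y" using F_eq_on_K[OF _ assms(3)] BK \<open>z \<in> B\<close> z(2) by auto
  ultimately show ?thesis using z(1) by blast
qed

lemma Finv_near:
  assumes "x0 \<in> D0" "dist x0 y < 3 * \<delta> / 2" "\<bar>e\<bar> \<le> r0"
  shows "y \<in> F e ` V" "Finv e y \<in> V" "F e (Finv e y) = y" "norm (Finv e y - y) \<le> \<bar>e\<bar> * M"
proof -
  obtain z where z: "z \<in> V" "F e z = y" "dist y z \<le> \<bar>e\<bar> * M" using F_preimage[OF assms] by blast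
  have Finv_y: "Finv e y = z"
    unfolding Finv_def using the_inv_into_f_f[OF inj_on_F[OF assms(3)] z(1)] z(2) by simp
  show "y \<in> F e ` V" using z by blast
  show "Finv e y \<in> V" "F e (Finv e y) = y" using Finv_y z by simp_all
  show "norm (Finv e y - y) \<le> \<bar>e\<bar> * M" using Finv_y z(3) by (metis dist_commute dist_norm)
qed

lemma F_step_near:
  assumes "x0 \<in> D0" "dist x0 y < 3 * \<delta> / 2" "\<bar>e\<bar> \<le> r0"
  shows "norm (F e y - y) \<le> \<bar>e\<bar> * M"
proof -
  have "y \<in> K" using K_neighbourhood[OF assms(1)] assms(2) \<delta>_pos by simp
  then show ?thesis
    using F_eq_on_K[OF _ assms(3)] G_bound[OF _ assms(3)] by (simp add: mult_left_mono)
qed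

lemma orbit_displacement:
  fixes f :: "'a \<Rightarrow> 'a"
  assumes x: "x0 \<in> D0" "dist x0 x < \<delta>" and k: "real k * \<bar>e\<bar> \<le> r0"
    and step: "\<And>y. dist x0 y < 3 * \<delta> / 2 \<Longrightarrow> \<bar>e\<bar> \<le> r0 \<Longrightarrow> norm (f y - y) \<le> \<bar>e\<bar> * M"
  shows "dist x0 ((f ^^ k) x) < 3 * \<delta> / 2"
proof (cases "k = 0")
  case True
  then show ?thesis using x(2) \<delta>_pos by simp
next
  case False
  then have "\<bar>e\<bar> \<le> real k * \<bar>e\<bar>" by (simp add: mult_le_cancel_right1)
  then have e: "\<bar>e\<bar> \<le> r0" using k by linarith
  have near: "dist x0 y < 3 * \<delta> / 2" if "norm (y - x) \<le> \<delta> / 4" for y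
  proof -
    have "dist x y \<le> \<delta> / 4" using that by (simp add: dist_norm norm_minus_commute)
    then show ?thesis using dist_triangle[of x0 y x] x(2) \<delta>_pos by linarith
  qed
  have "real k * (\<bar>e\<bar> * M) \<le> \<delta> / 4"
    using mult_right_mono[OF k M_nonneg] r0_M by (simp add: mult.assoc)
  moreover have "norm ((f ^^ k) x - x) \<le> real k * (\<bar>e\<bar> * M)"
    by (rule norm_funpow_diff_le[where R="\<delta> / 4", OF step[OF near e]]) (use M_nonneg calculation in simp_all)
  ultimately show ?thesis using near by simp
qed

lemma orbits_near_D0:
  assumes "x0 \<in> D0" "dist x0 x < \<delta>" "real k * \<bar>e\<bar> \<le> r0"
  shows "dist x0 ((F e ^^ k) x) < 3 * \<delta> / 2" "dist x0 ((Finv e ^^ k) x) < 3 * \<delta> / 2"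
proof -
  show "dist x0 ((F e ^^ k) x) < 3 * \<delta> / 2"
    by (rule orbit_displacement[OF assms]) (rule F_step_near[OF assms(1)])
  show "dist x0 ((Finv e ^^ k) x) < 3 * \<delta> / 2"
    by (rule orbit_displacement[OF assms]) (rule Finv_near(4)[OF assms(1)])
qed

lemma orbits_in_V:
  assumes "x \<in> W" "real n * \<bar>e\<bar> \<le> r0"
  shows "k \<le> n \<Longrightarrow> (F e ^^ k) x \<in> V" and "k \<le> n \<Longrightarrow> (Finv e ^^ k) x \<in> V"
    and "k < n \<Longrightarrow> (Finv e ^^ k) x \<in> F e ` V"
proof -
  obtain x0 where x0: "x0 \<in> D0" "dist x0 x < \<delta>" using assms(1) unfolding W_def by auto
  have k: "real k * \<bar>e\<bar> \<le> r0" if "k \<le> n" for k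
    using mult_right_mono[of "real k" "real n" "\<bar>e\<bar>"] that assms(2) by simp
  show "(F e ^^ k) x \<in> V" "(Finv e ^^ k) x \<in> V" if "k \<le> n"
    using near_D0_in_V[OF x0(1) orbits_near_D0(1)[OF x0 k[OF that]]]
      near_D0_in_V[OF x0(1) orbits_near_D0(2)[OF x0 k[OF that]]] by simp_all
  show "(Finv e ^^ k) x \<in> F e ` V" if "k < n"
  proof (rule Finv_near(1)[OF x0(1) orbits_near_D0(2)[OF x0 k]])
    show "k \<le> n" using that by simp
    show "\<bar>e\<bar> \<le> r0" using k[of 1] that by simp
  qed
qed

lemma inj_frechet_derivative_F_Pair:
  assumes "x \<in> V" "\<bar>e\<bar> < r0"
  shows "inj (frechet_derivative (\<lambda>(x, e). (F e x, e)) (at (x, e)))"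
proof -
  have xK: "x \<in> K" and e: "\<bar>e\<bar> \<le> r0" using assms V_subset_K by auto
  have p: "(x, e) \<in> D \<times> {-\<epsilon>0<..<\<epsilon>0}" using xK K_subset_D small_parameter(1)[OF e] by auto
  define T where "T h = (fst h + (e *\<^sub>R DG (x, e) h + snd h *\<^sub>R G e x), snd h)" for h
  have "((\<lambda>q. (fst q + snd q *\<^sub>R (\<lambda>(x, e). G e x) q, snd q)) has_derivative T) (at (x, e))"
    unfolding T_def
    using has_derivative_Pair[OF has_derivative_add[OF has_derivative_fst[OF has_derivative_ident]
        has_derivative_scaleR[OF has_derivative_snd[OF has_derivative_ident] G_has_derivative[OF p]]]
      has_derivative_snd[OF has_derivative_ident]]
    by simp
  moreover have "(fst q + snd q *\<^sub>R (\<lambda>(x, e). G e x) q, snd q) = (\<lambda>(x, e). (F e x, e)) q"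
    if "q \<in> D \<times> {-\<epsilon>0<..<\<epsilon>0}" for q
    using that F_eq[of "fst q" "snd q"] by (auto simp: abs_less_iff split_beta)
  ultimately have "((\<lambda>(x, e). (F e x, e)) has_derivative T) (at (x, e))"
    using has_derivative_transform_within_open[OF _ open_domain p] by blast
  then have DT: "frechet_derivative (\<lambda>(x, e). (F e x, e)) (at (x, e)) = T" and "linear T"
    using frechet_derivative_at[symmetric] has_derivative_linear by blast+
  have "h = 0" if "T h = 0" for h
  proof -
    obtain u s where h: "h = (u, s)" by (cases h)
    have "s = 0" using that h by (simp add: T_def zero_prod_def)
    then have "u + e *\<^sub>R DG (x, e) (u, 0) = 0" using that h by (simp add: T_def zero_prod_def)
    then have u: "u = - (e *\<^sub>R DG (x, e) (u, 0))" by (simp add: eq_neg_iff_add_eq_0)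
    have "norm u = norm (- (e *\<^sub>R DG (x, e) (u, 0)))" using u by (rule arg_cong)
    also have "\<dots> = \<bar>e\<bar> * norm (DG (x, e) (u, 0))" by simp
    also have "\<dots> \<le> \<bar>e\<bar> * (L * norm u)" using DG_bound[OF xK e, of "(u, 0)"] by (simp add: mult_left_mono)
    also have "\<dots> \<le> norm u / 2" using mult_right_mono[OF small_parameter(3)[OF e], of "norm u"] by simp
    finally have "u = 0" by simp
    then show ?thesis using h \<open>s = 0\<close> by (simp add: zero_prod_def)
  qed
  then show ?thesis unfolding DT using linear_injective_0[OF \<open>linear T\<close>] by blast
qed

lemma smooth_on_Finv:
  obtains U where "open U" "smooth_on U (\<lambda>(y, e). Finv e y)"
    "\<And>x0 y e. x0 \<in> D0 \<Longrightarrow> dist x0 y < 3 * \<delta> / 2 \<Longrightarrow> \<bar>e\<bar> < r0 \<Longrightarrow> (y, e) \<in> U"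
proof -
  define Om where "Om = V \<times> {-r0<..<r0}"
  define \<Psi> :: "'a \<times> real \<Rightarrow> 'a \<times> real" where "\<Psi> = (\<lambda>(x, e). (F e x, e))"
  have open_Om: "open Om" unfolding Om_def using open_V by (simp add: open_Times)
  have Om_dom: "Om \<subseteq> D \<times> {-\<epsilon>0<..<\<epsilon>0}" unfolding Om_def using V_subset_D r0_less by auto
  have "smooth_on Om (\<lambda>q. ((\<lambda>(x, e). F e x) q, snd q))"
    by (rule smooth_on_Pair[OF open_Om smooth_on_subset[OF smooth_F Om_dom] smooth_on_snd[OF open_Om]])
  then have smooth_\<Psi>: "smooth_on Om \<Psi>" unfolding \<Psi>_def by (simp add: case_prod_beta')
  have inv: "(\<lambda>(y, e). (Finv e y, e)) (\<Psi> z) = z" if "z \<in> Om" for z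
    using that the_inv_into_f_f[OF inj_on_F] unfolding Om_def \<Psi>_def Finv_def by auto
  have "inj (frechet_derivative \<Psi> (at z))" if "z \<in> Om" for z
    using that inj_frechet_derivative_F_Pair unfolding Om_def \<Psi>_def by auto
  from smooth_on_inverse_open[OF open_Om smooth_\<Psi> inv this]
  have U: "open (\<Psi> ` Om)" "smooth_on (\<Psi> ` Om) (\<lambda>(y, e). (Finv e y, e))" by blast+
  show thesis
  proof (rule that[OF U(1)])
    show "smooth_on (\<Psi> ` Om) (\<lambda>(y, e). Finv e y)"
      using smooth_on_compose[OF U(1) open_UNIV U(2) smooth_on_fst[OF open_UNIV]]
      by (simp add: case_prod_beta')
    fix x0 y e assume "x0 \<in> D0" "dist x0 y < 3 * \<delta> / 2" "\<bar>e\<bar> < r0"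
    then obtain z where "z \<in> V" "F e z = y" using F_preimage[of x0 y e] by auto
    then show "(y, e) \<in> \<Psi> ` Om"
      unfolding Om_def \<Psi>_def using \<open>\<bar>e\<bar> < r0\<close> by (auto intro!: image_eqI[of _ _ "(z, e)"])
  qed
qed

lemma smooth_on_G_along_orbits:
  assumes S: "open S"
    and in_S: "\<And>x e. (x, e) \<in> S \<Longrightarrow> x \<in> W \<and> \<bar>e\<bar> < \<epsilon>0 \<and> real n * \<bar>e\<bar> \<le> r0 \<and> \<bar>e\<bar> < r0"
    and "j \<le> n"
  shows "smooth_on S (\<lambda>p. G (snd p) ((F (snd p) ^^ j) (fst p)))"
    and "smooth_on S (\<lambda>p. G (snd p) ((Finv (snd p) ^^ j) (fst p)))"
proof -
  obtain U where U: "open U" "smooth_on U (\<lambda>(y, e). Finv e y)"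
    "\<And>x0 y e. x0 \<in> D0 \<Longrightarrow> dist x0 y < 3 * \<delta> / 2 \<Longrightarrow> \<bar>e\<bar> < r0 \<Longrightarrow> (y, e) \<in> U"
    using smooth_on_Finv by blast
  have near: "dist x0 ((F e ^^ i) x) < 3 * \<delta> / 2 \<and> dist x0 ((Finv e ^^ i) x) < 3 * \<delta> / 2"
    if "(x, e) \<in> S" "x0 \<in> D0" "dist x0 x < \<delta>" "i \<le> n" for x e x0 i
  proof -
    have "real i * \<bar>e\<bar> \<le> r0"
      using mult_right_mono[of "real i" "real n" "\<bar>e\<bar>"] that(4) in_S[OF that(1)] by simp
    then show ?thesis using orbits_near_D0[OF that(2,3)] by blast
  qed
  have orbit: "((F e ^^ i) x, e) \<in> D \<times> {-\<epsilon>0<..<\<epsilon>0} \<and> ((Finv e ^^ i) x, e) \<in> D \<times> {-\<epsilon>0<..<\<epsilon>0} \<and>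
      ((Finv e ^^ i) x, e) \<in> U" if xe: "(x, e) \<in> S" "i \<le> n" for x e i
  proof -
    obtain x0 where x0: "x0 \<in> D0" "dist x0 x < \<delta>" using in_S[OF xe(1)] unfolding W_def by auto
    show ?thesis
      using near[OF xe(1) x0 xe(2)] near_D0_in_V[OF x0(1)] V_subset_D U(3)[OF x0(1)] in_S[OF xe(1)]
      by (auto simp: abs_less_iff)
  qed
  have F_iter: "smooth_on S (\<lambda>p. (F (snd p) ^^ j) (fst p))"
    by (rule smooth_on_funpow_param[OF S open_domain smooth_F _ \<open>j \<le> n\<close>])
      (use orbit[of "fst p" "snd p" for p] in auto)
  have Finv_iter: "smooth_on S (\<lambda>p. (Finv (snd p) ^^ j) (fst p))"
    by (rule smooth_on_funpow_param[OF S U(1,2) _ \<open>j \<le> n\<close>])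
      (use orbit[of "fst p" "snd p" for p] in auto)
  show "smooth_on S (\<lambda>p. G (snd p) ((F (snd p) ^^ j) (fst p)))"
    by (rule smooth_on_G_along[OF S F_iter]) (use orbit[of "fst p" "snd p" j for p] \<open>j \<le> n\<close> in auto)
  show "smooth_on S (\<lambda>p. G (snd p) ((Finv (snd p) ^^ j) (fst p)))"
    by (rule smooth_on_G_along[OF S Finv_iter]) (use orbit[of "fst p" "snd p" j for p] \<open>j \<le> n\<close> in auto)
qed

lemma interp_field_ext_smooth:
  assumes "1 \<le> n"
  shows "smooth_on (W \<times> {e. \<bar>e\<bar> < \<epsilon>0 \<and> real n * \<bar>e\<bar> < r0}) (\<lambda>(x, e). interp_field_ext F Finv G n x e)"
proof -
  define S where "S = W \<times> {e. \<bar>e\<bar> < \<epsilon>0 \<and> real n * \<bar>e\<bar> < r0}"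
  have S: "open S"
    unfolding S_def using open_W by (intro open_Times open_Collect_conj open_Collect_less continuous_intros)
  have in_S: "x \<in> W \<and> \<bar>e\<bar> < \<epsilon>0 \<and> real n * \<bar>e\<bar> \<le> r0 \<and> \<bar>e\<bar> < r0" if "(x, e) \<in> S" for x e
  proof -
    have "\<bar>e\<bar> \<le> real n * \<bar>e\<bar>" using assms by (simp add: mult_le_cancel_right1)
    then show ?thesis using that unfolding S_def by auto
  qed
  have "smooth_on S (\<lambda>p. \<Sum>k=1..n. pcoef n k *\<^sub>R
      (\<Sum>j<k. G (snd p) ((F (snd p) ^^ j) (fst p)) + G (snd p) ((Finv (snd p) ^^ Suc j) (fst p))))"
    by (intro smooth_on_sum smooth_on_scaleR smooth_on_const smooth_on_add S
        smooth_on_G_along_orbits[OF S in_S]) auto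
  then show ?thesis unfolding S_def interp_field_ext_def by (simp add: case_prod_beta')
qed

lemma interp_field_ext_at_zero:
  assumes "1 \<le> n" "x \<in> V"
  shows "interp_field_ext F Finv G n x 0 = G 0 x"
proof (rule interp_field_ext_at_fixpoint[OF assms(1)])
  show F0: "F 0 x = x" using F_eq_on_K[of x 0] assms(2) V_subset_K r0_pos by auto
  show "Finv 0 x = x"
    using the_inv_into_f_f[OF inj_on_F[of 0] assms(2)] F0 r0_pos unfolding Finv_def by simp
qed

lemma interp_field_eq_interp_field_ext:
  assumes "x \<in> W" "e \<noteq> 0" "real n * \<bar>e\<bar> \<le> r0"
  shows "interp_field F Finv n x e = interp_field_ext F Finv G n x e"
proof (rule interp_field_eq_ext[OF assms(2)])
  fix j assume j: "j < n"
  then have e: "\<bar>e\<bar> \<le> r0"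
    using mult_right_mono[of 1 "real n" "\<bar>e\<bar>"] assms(3) by simp
  show "(F e ^^ Suc j) x = (F e ^^ j) x + e *\<^sub>R G e ((F e ^^ j) x)"
    using F_eq_on_K[OF _ e] V_subset_K orbits_in_V(1)[OF assms(1,3), of j] j by auto
  obtain x0 where x0: "x0 \<in> D0" "dist x0 x < \<delta>" using assms(1) unfolding W_def by auto
  have "real j * \<bar>e\<bar> \<le> r0"
    using mult_right_mono[of "real j" "real n" "\<bar>e\<bar>"] j assms(3) by simp
  from Finv_near[OF x0(1) orbits_near_D0(2)[OF x0 this] e]
  show "(Finv e ^^ j) x = (Finv e ^^ Suc j) x + e *\<^sub>R G e ((Finv e ^^ Suc j) x)"
    using F_eq_on_K[OF _ e] V_subset_K by (metis funpow.simps(2) o_apply subsetD)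
qed

lemma interp_field_smooth_extension:
  assumes "1 \<le> n"
  shows "\<exists>Y. smooth_on (W \<times> {e. \<bar>e\<bar> < \<epsilon>0 \<and> real n * \<bar>e\<bar> < r0}) (\<lambda>(x, e). Y x e) \<and>
    (\<forall>x\<in>W. Y x 0 = G 0 x) \<and>
    (\<forall>x\<in>W. \<forall>e. e \<noteq> 0 \<and> \<bar>e\<bar> < \<epsilon>0 \<and> real n * \<bar>e\<bar> < r0 \<longrightarrow> Y x e = interp_field F Finv n x e)"
proof (intro exI[of _ "interp_field_ext F Finv G n"] conjI ballI allI impI)
  show "smooth_on (W \<times> {e. \<bar>e\<bar> < \<epsilon>0 \<and> real n * \<bar>e\<bar> < r0}) (\<lambda>(x, e). interp_field_ext F Finv G n x e)"
    by (rule interp_field_ext_smooth[OF assms])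
  show "interp_field_ext F Finv G n x 0 = G 0 x" if "x \<in> W" for x
    using interp_field_ext_at_zero[OF assms] W_subset_V that by blast
  show "interp_field_ext F Finv G n x e = interp_field F Finv n x e"
    if "x \<in> W" "e \<noteq> 0 \<and> \<bar>e\<bar> < \<epsilon>0 \<and> real n * \<bar>e\<bar> < r0" for x e
    using interp_field_eq_interp_field_ext[of x e n] that by simp
qed

end

theorem mainTheorem4:
  fixes D D0 :: "'a::euclidean_space set"
    and F G :: "real \<Rightarrow> 'a \<Rightarrow> 'a"
    and \<epsilon>0 :: real
  assumes "open D"
    and "\<epsilon>0 > 0"
    and "smooth_on (D \<times> {-\<epsilon>0<..<\<epsilon>0}) (\<lambda>(x, e). F e x)"
    and "smooth_on (D \<times> {-\<epsilon>0<..<\<epsilon>0}) (\<lambda>(x, e). G e x)"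
    and "\<And>x e. x \<in> D \<Longrightarrow> \<bar>e\<bar> < \<epsilon>0 \<Longrightarrow> F e x = x + e *\<^sub>R G e x"
    and "compact D0" and "D0 \<subseteq> D"
  shows "\<exists>r0 > 0. \<exists>W V. open W \<and> open V \<and> D0 \<subseteq> W \<and> W \<subseteq> V \<and> V \<subseteq> D \<and>
     (\<forall>e. \<bar>e\<bar> < \<epsilon>0 \<and> \<bar>e\<bar> \<le> r0 \<longrightarrow> inj_on (F e) V) \<and>
     (\<forall>x\<in>W. \<forall>n e. \<bar>e\<bar> < \<epsilon>0 \<and> real n * \<bar>e\<bar> \<le> r0 \<longrightarrow>
        (\<forall>k\<le>n. (F e ^^ k) x \<in> V) \<and>
        (\<forall>k<n. (the_inv_into V (F e) ^^ k) x \<in> F e ` V) \<and>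
        (\<forall>k\<le>n. (the_inv_into V (F e) ^^ k) x \<in> V)) \<and>
     (\<forall>n\<ge>1. \<exists>Y :: 'a \<Rightarrow> real \<Rightarrow> 'a.
        smooth_on (W \<times> {e. \<bar>e\<bar> < \<epsilon>0 \<and> real n * \<bar>e\<bar> < r0}) (\<lambda>(x, e). Y x e) \<and>
        (\<forall>x\<in>W. Y x 0 = G 0 x) \<and>
        (\<forall>x\<in>W. \<forall>e. e \<noteq> 0 \<and> \<bar>e\<bar> < \<epsilon>0 \<and> real n * \<bar>e\<bar> < r0 \<longrightarrow>
           Y x e = interp_field F (\<lambda>e. the_inv_into V (F e)) n x e))"
proof -
  interpret near_identity_family D \<epsilon>0 F G
    using assms(1-5) by unfold_locales
  obtain K \<delta> M L r0 where "near_identity_estimates D \<epsilon>0 F G D0 K \<delta> M L r0"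
    using near_identity_estimates_exist[OF assms(6,7)] by blast
  then interpret near_identity_estimates D \<epsilon>0 F G D0 K \<delta> M L r0 .
  have Finv_eq: "(\<lambda>e. the_inv_into V (F e)) = Finv" by (simp add: Finv_def fun_eq_iff)
  have orbits: "(\<forall>k\<le>n. (F e ^^ k) x \<in> V) \<and> (\<forall>k<n. (the_inv_into V (F e) ^^ k) x \<in> F e ` V) \<and>
      (\<forall>k\<le>n. (the_inv_into V (F e) ^^ k) x \<in> V)" if "x \<in> W" "real n * \<bar>e\<bar> \<le> r0" for x n e
    using orbits_in_V[OF that] unfolding Finv_def by blast
  show ?thesis
  proof (rule exI[of _ r0], rule conjI[OF r0_pos], rule exI[of _ W], rule exI[of _ V], intro conjI)
  qed (use open_W open_V D0_subset_W W_subset_V V_subset_D inj_on_F orbits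
      interp_field_smooth_extension[unfolded Finv_eq[symmetric]] in blast)+
qed

end
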